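(* Consider the energy-harvesting model described in the context, with parameters $p\in(0,1)$, $\gamma>0$, $B>0$, $w\in\mathbb{N}$. Let $\pi^*(w)$ be an optimal look-ahead policy of the stationary form described in the context (uniform allocation $b_\tau/d_\tau$ when an arrival is observed at distance $d_\tau\ge 1$ in the window, and $a_\tau=\mathcal{A}(b_\tau)$ otherwise), and let $(\xi_j^* )_{j\ge1}$ be its induced sequence. Then: (i) $\Gamma^*=\mathcal{T}_\infty^*$, where $\mathcal{T}_\infty^*=\sup \mathcal{T}_\infty(x_1,x_2,\dots)$ over all admissible sequences $(x_j)_{j\ge1}$; (ii) $(\xi_j^* )_{j\ge1}$ is the unique maximizer of $\mathcal{T}_\infty$ over admissible sequences; (iii) $(\xi_j^* )_{j\ge1}$ is the unique sequence satisfying, for all $j\in\mathbb{N}$, $$\frac{1-p}{1+\gamma \xi_{j+1}^*}=\frac{1}{1+\gamma \xi_j^*}-\frac{p}{1+\frac{\gamma}{w}\left(B-\sum_{i=1}^{j}\xi_i^*\right)},\qquad\text{and}\qquad \sum_{j=1}^{\infty}\xi_j^*=B;$$ (iv) $(\xi_j^* )_{j\ge1}$ is a strictly decreasing sequence of positive numbers satisfying $\xi_j^*<\frac{1}{w}\left(B-\sum_{i=1}^{j}\xi_i^*\right)$ for every $j\in\mathbb{N}$.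
   Context: Model: a transmitter sends over an AWGN channel with constant gain $\gamma>0$ in discrete time slots $\tau\in\mathbb{N}$; the reward of sending energy $a$ in a slot is $\frac12\log_2(1+\gamma a)$. The transmitter has a battery of capacity $B>0$. Energy arrivals $E_1,E_2,\dots$ are i.i.d. with $\Pr(E_\tau=B)=p$, $\Pr(E_\tau=0)=1-p$, where $0<p<1$. The battery level satisfies $B_1=B$ (the optimal value does not depend on the initial level) and $B_\tau=\min\{B_{\tau-1}-A_{\tau-1}+E_\tau,\,B\}$, where the action $A_\tau$ (energy spent at time $\tau$) must satisfy $0\le A_\tau\le B_\tau$. The transmitter has look-ahead window $w\in\mathbb{N}$: at time $\tau$ it knows $E_1,\dots,E_{\tau+w}$ (and $B_1$), and a (look-ahead) policy $\pi(w)$ is a sequence of (possibly randomized) action functions $A_\tau=\mathcal{A}_\tau((E_t)_{t=1}^{\tau+w},B_1)$. Its $T$-horizon average throughput is $\Gamma_T^{\pi(w)}=\frac1T\mathbb{E}\sum_{\tau=1}^T\frac12\log_2(1+\gamma A_\tau)$, and $\Gamma^*=\sup_{\pi(w)}\liminf_{T\to\infty}\Gamma_T^{\pi(w)}$. An optimal policy exists that is deterministic, Markovian and stationary; for the Bernoulli arrivals it can be taken of the following form: let $d_\tau=\min\{t\in\{1,\dots,w\}:E_{\tau+t}=B\}$ if this set is nonempty and $d_\tau=0$ otherwise; then $a_\tau=b_\tau/d_\tau$ if $d_\tau\neq0$, and $a_\tau=\mathcal{A}(b_\tau)$ if $d_\tau=0$, for some fixed function $\mathcal{A}$ with $0\le\mathcal{A}(b)\le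 b$. The sequence induced by such a policy is $\xi_j^*=\mathcal{A}(b_j)$, where $b_1=B$ and $b_{j+1}=b_j-\xi_j^*$ (the energies spent after a full charge while no arrival is seen in the window). A nonnegative sequence $(x_j)_{j\ge1}$ is admissible if $\sum_j x_j\le B$. For an admissible sequence, $$\mathcal{T}_\infty(x_1,x_2,\dots)=\sum_{k=1}^{w}p^2(1-p)^{k-1}\frac{k}{2}\log_2\!\Big(1+\gamma\frac{B}{k}\Big)+\sum_{j=1}^{\infty}p(1-p)^{j+w-1}\frac12\log_2(1+\gamma x_j)+\sum_{k=1}^{\infty}p^2(1-p)^{k+w-1}\frac{w}{2}\log_2\!\Big(1+\gamma\frac{B-\sum_{j=1}^{k}x_j}{w}\Big).$$ *)

theory Defs
  imports "HOL-Analysis.Analysis"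
begin

text \<open>Times are 1-indexed as in the paper: an arrival sequence is
  e :: nat => bool with e t = (E_t = B) for t >= 1 (e 0 is ignored).
  A (possibly randomized) look-ahead policy is pol :: nat => (nat => bool) => real => real,
  pol tau e u = A_tau, where u in [0,1] is a uniformly distributed randomization seed
  independent of the arrivals.\<close>

text \<open>Battery level under a policy: batt B pol e u n = B_(n+1).\<close>
fun batt :: "real \<Rightarrow> (nat \<Rightarrow> (nat \<Rightarrow> bool) \<Rightarrow> real \<Rightarrow> real) \<Rightarrow> (nat \<Rightarrow> bool) \<Rightarrow> real \<Rightarrow> nat \<Rightarrow> real" where
  "batt B pol e u 0 = B"
| "batt B pol e u (Suc n) =
     min (batt B pol e u n - pol (Suc n) e u + (if e (n + 2) then B else 0)) B"

definition feasible_policy :: "real \<Rightarrow> nat \<Rightarrow> (nat \<Rightarrow> (nat \<Rightarrow> bool) \<Rightarrow> real \<Rightarrow> real) \<Rightarrow> bool" where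
  "feasible_policy B w pol \<longleftrightarrow>
     (\<forall>\<tau>\<ge>1. \<forall>e e' u. (\<forall>t\<in>{1..\<tau>+w}. e t = e' t) \<longrightarrow> pol \<tau> e u = pol \<tau> e' u) \<and>
     (\<forall>\<tau> e. pol \<tau> e \<in> borel_measurable borel) \<and>
     (\<forall>\<tau>\<ge>1. \<forall>e. \<forall>u\<in>{0..1}. 0 \<le> pol \<tau> e u \<and> pol \<tau> e u \<le> batt B pol e u (\<tau> - 1))"

definition hist_prob :: "real \<Rightarrow> bool list \<Rightarrow> real" where
  "hist_prob p xs = prod_list (map (\<lambda>b. if b then p else 1 - p) xs)"

definition seq_of :: "bool list \<Rightarrow> nat \<Rightarrow> bool" where
  "seq_of xs t = (1 \<le> t \<and> t \<le> length xs \<and> xs ! (t - 1))"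

definition avg_throughput :: "real \<Rightarrow> real \<Rightarrow> nat \<Rightarrow> (nat \<Rightarrow> (nat \<Rightarrow> bool) \<Rightarrow> real \<Rightarrow> real) \<Rightarrow> nat \<Rightarrow> real" where
  "avg_throughput p \<gamma> w pol T =
     (1 / real T) * (\<Sum>xs\<in>{xs :: bool list. length xs = T + w}.
        hist_prob p xs * (LBINT u:{0..1}. (\<Sum>\<tau>=1..T. log 2 (1 + \<gamma> * pol \<tau> (seq_of xs) u) / 2)))"

definition opt_value :: "real \<Rightarrow> real \<Rightarrow> real \<Rightarrow> nat \<Rightarrow> ereal" where
  "opt_value p \<gamma> B w =
     (SUP pol\<in>{pol. feasible_policy B w pol}. liminf (\<lambda>T. ereal (avg_throughput p \<gamma> w pol T)))"

text \<open>Sequences are 0-indexed: x j stands for the paper's x_(j+1).\<close>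
definition admissible :: "real \<Rightarrow> (nat \<Rightarrow> real) \<Rightarrow> bool" where
  "admissible B x \<longleftrightarrow> (\<forall>j. 0 \<le> x j) \<and> summable x \<and> suminf x \<le> B"

definition T_inf :: "real \<Rightarrow> real \<Rightarrow> real \<Rightarrow> nat \<Rightarrow> (nat \<Rightarrow> real) \<Rightarrow> real" where
  "T_inf p \<gamma> B w x =
     (\<Sum>k=1..w. p^2 * (1 - p)^(k - 1) * (real k / 2) * log 2 (1 + \<gamma> * B / real k))
   + (\<Sum>j. p * (1 - p)^(j + w) * (log 2 (1 + \<gamma> * x j) / 2))
   + (\<Sum>k. p^2 * (1 - p)^(k + w) * (real w / 2) * log 2 (1 + \<gamma> * (B - (\<Sum>i\<le>k. x i)) / real w))"

definition win_dist :: "nat \<Rightarrow> (nat \<Rightarrow> bool) \<Rightarrow> nat \<Rightarrow> nat" where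
  "win_dist w e \<tau> = (if \<exists>t\<in>{1..w}. e (\<tau> + t) then (LEAST t. t \<in> {1..w} \<and> e (\<tau> + t)) else 0)"

definition stat_rule :: "nat \<Rightarrow> (real \<Rightarrow> real) \<Rightarrow> (nat \<Rightarrow> bool) \<Rightarrow> nat \<Rightarrow> real \<Rightarrow> real" where
  "stat_rule w Afun e \<tau> b = (if win_dist w e \<tau> \<noteq> 0 then b / real (win_dist w e \<tau>) else Afun b)"

text \<open>Battery under the stationary policy: sbatt ... n = B_(n+1).\<close>
fun sbatt :: "real \<Rightarrow> nat \<Rightarrow> (real \<Rightarrow> real) \<Rightarrow> (nat \<Rightarrow> bool) \<Rightarrow> nat \<Rightarrow> real" where
  "sbatt B w Afun e 0 = B"
| "sbatt B w Afun e (Suc n) =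
     min (sbatt B w Afun e n - stat_rule w Afun e (Suc n) (sbatt B w Afun e n)
          + (if e (n + 2) then B else 0)) B"

definition stat_policy :: "real \<Rightarrow> nat \<Rightarrow> (real \<Rightarrow> real) \<Rightarrow> nat \<Rightarrow> (nat \<Rightarrow> bool) \<Rightarrow> real \<Rightarrow> real" where
  "stat_policy B w Afun \<tau> e u = stat_rule w Afun e \<tau> (sbatt B w Afun e (\<tau> - 1))"

fun ind_batt :: "real \<Rightarrow> (real \<Rightarrow> real) \<Rightarrow> nat \<Rightarrow> real" where
  "ind_batt B Afun 0 = B"
| "ind_batt B Afun (Suc j) = ind_batt B Afun j - Afun (ind_batt B Afun j)"

definition induced_seq :: "real \<Rightarrow> (real \<Rightarrow> real) \<Rightarrow> nat \<Rightarrow> real" where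
  "induced_seq B Afun j = Afun (ind_batt B Afun j)"

end

theory Submission
  imports Defs
begin

text \<open>
  Under the stationary policy the battery level in a slot is a function of the age of the last full
  charge and of the distance to the first arrival seen in the window; these are independent and
  truncated geometric, so the expected reward of a slot converges and, after regrouping, the
  long-run throughput is \<open>T_inf\<close> of the induced sequence.  Every sequence with positive entries is
  induced by some stationary rule, so optimality of the policy bounds \<open>T_inf\<close> on such sequences,
  and concavity of \<open>T_inf\<close> extends the bound to all admissible sequences; strict concavity gives
  uniqueness of the maximizer.  Moving mass between consecutive slots of a maximizer, or adding
  unused budget, shows that its entries are positive and satisfy the recursion.  Conversely, the
  recursion telescopes to \<open>(1 - p)^j / (1 + \<gamma> x_j) = p \<Sum>k\<ge>j. (1 - p)^k / (1 + \<gamma> R_k / w)\<close>, with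
  \<open>R_k\<close> the unspent budget, which by summation by parts makes the tangent-line bound on
  \<open>T_inf y - T_inf x\<close> vanish; this characterizes the maximizer and yields its ordering properties.
\<close>

section \<open>The look-ahead window\<close>

lemma win_dist_eq_0_iff: "win_dist w e \<tau> = 0 \<longleftrightarrow> (\<forall>t\<in>{1..w}. \<not> e (\<tau> + t))"
proof (cases "\<exists>t\<in>{1..w}. e (\<tau> + t)")
  case True
  then have "(LEAST t. t \<in> {1..w} \<and> e (\<tau> + t)) \<in> {1..w}"
    using LeastI_ex[of "\<lambda>t. t \<in> {1..w} \<and> e (\<tau> + t)"] by blast
  then show ?thesis using True by (auto simp: win_dist_def)
qed (auto simp: win_dist_def)

lemma win_dist_nonzero:
  assumes "win_dist w e \<tau> \<noteq> 0"
  shows "win_dist w e \<tau> \<in> {1..w}" and "e (\<tau> + win_dist w e \<tau>)"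
    and "\<And>t. 1 \<le> t \<Longrightarrow> t < win_dist w e \<tau> \<Longrightarrow> \<not> e (\<tau> + t)"
proof -
  let ?P = "\<lambda>t. t \<in> {1..w} \<and> e (\<tau> + t)"
  have "\<exists>t\<in>{1..w}. e (\<tau> + t)" using assms by (simp add: win_dist_eq_0_iff)
  then have ex: "\<exists>t. ?P t" and d: "win_dist w e \<tau> = Least ?P" by (auto simp: win_dist_def)
  show range: "win_dist w e \<tau> \<in> {1..w}" and "e (\<tau> + win_dist w e \<tau>)"
    unfolding d using LeastI_ex[OF ex] by auto
  show "\<not> e (\<tau> + t)" if "1 \<le> t" "t < win_dist w e \<tau>" for t
  proof
    assume "e (\<tau> + t)"
    then have "?P t" using that range by auto
    then show False using not_less_Least[of t ?P] that(2) unfolding d by blast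
  qed
qed

lemma win_dist_eqI:
  assumes "d \<in> {1..w}" "e (\<tau> + d)" "\<And>t. 1 \<le> t \<Longrightarrow> t < d \<Longrightarrow> \<not> e (\<tau> + t)"
  shows "win_dist w e \<tau> = d"
proof -
  have "(LEAST t. t \<in> {1..w} \<and> e (\<tau> + t)) = d"
    by (rule Least_equality) (use assms in \<open>auto simp: not_less[symmetric]\<close>)
  then show ?thesis using assms by (auto simp: win_dist_def)
qed

lemma win_dist_cong:
  assumes "\<And>t. t \<in> {1..w} \<Longrightarrow> e (\<tau> + t) = e' (\<tau>' + t)"
  shows "win_dist w e \<tau> = win_dist w e' \<tau>'"
proof -
  have "(\<exists>t\<in>{1..w}. e (\<tau> + t)) = (\<exists>t\<in>{1..w}. e' (\<tau>' + t))"
    and "(\<lambda>t. t \<in> {1..w} \<and> e (\<tau> + t)) = (\<lambda>t. t \<in> {1..w} \<and> e' (\<tau>' + t))"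
    using assms by auto
  then show ?thesis unfolding win_dist_def by simp
qed

lemma win_dist_eq_1_iff: "1 \<le> w \<Longrightarrow> win_dist w e \<tau> = 1 \<longleftrightarrow> e (Suc \<tau>)"
  using win_dist_nonzero(2)[of w e \<tau>] win_dist_eqI[of 1 w e \<tau>] by force

lemma win_dist_Suc_decrement:
  assumes "win_dist w e \<tau> \<noteq> 0" "win_dist w e \<tau> \<noteq> 1"
  shows "win_dist w e (Suc \<tau>) = win_dist w e \<tau> - 1"
proof (rule win_dist_eqI)
  note d = win_dist_nonzero[OF assms(1)]
  show "win_dist w e \<tau> - 1 \<in> {1..w}" "e (Suc \<tau> + (win_dist w e \<tau> - 1))"
    using d(1,2) assms(2) by auto
  show "\<not> e (Suc \<tau> + t)" if "1 \<le> t" "t < win_dist w e \<tau> - 1" for t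
    using d(3)[of "Suc t"] that by simp
qed

lemma win_dist_Suc_of_zero:
  assumes "win_dist w e \<tau> = 0"
  shows "win_dist w e (Suc \<tau>) \<in> {0, w}"
proof (rule ccontr)
  let ?d = "win_dist w e (Suc \<tau>)"
  assume "?d \<notin> {0, w}"
  then have "Suc ?d \<in> {1..w}" "e (\<tau> + Suc ?d)"
    using win_dist_nonzero(1,2)[of w e "Suc \<tau>"] by auto
  moreover have "\<forall>t\<in>{1..w}. \<not> e (\<tau> + t)" using assms by (simp add: win_dist_eq_0_iff)
  ultimately show False by blast
qed

lemma win_dist_0_window [simp]: "win_dist 0 e \<tau> = 0"
  by (simp add: win_dist_def)

lemma win_dist_Suc_window:
  "win_dist (Suc w) e \<tau> =
     (if e (Suc \<tau>) then 1 else if win_dist w e (Suc \<tau>) = 0 then 0 else Suc (win_dist w e (Suc \<tau>)))"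
proof -
  have shift: "(\<forall>t\<in>{1..Suc w}. \<not> e (\<tau> + t))
      \<longleftrightarrow> \<not> e (Suc \<tau>) \<and> (\<forall>t\<in>{1..w}. \<not> e (Suc \<tau> + t))"
  proof -
    have "{1..Suc w} = insert 1 (Suc ` {1..w})"
      by (simp add: atLeastAtMost_insertL)
    then show ?thesis by (simp del: image_Suc_atLeastAtMost)
  qed
  show ?thesis
  proof (cases "e (Suc \<tau>)")
    case True
    then show ?thesis using win_dist_eq_1_iff[of "Suc w" e \<tau>] by simp
  next
    case no_arrival: False
    show ?thesis
    proof (cases "win_dist w e (Suc \<tau>) = 0")
      case True
      then show ?thesis using no_arrival shift by (simp add: win_dist_eq_0_iff)
    next
      case False
      note d = win_dist_nonzero[OF False]
      have "win_dist (Suc w) e \<tau> = Suc (win_dist w e (Suc \<tau>))"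
      proof (rule win_dist_eqI)
        show "\<not> e (\<tau> + t)" if "1 \<le> t" "t < Suc (win_dist w e (Suc \<tau>))" for t
          using no_arrival d(3)[of "t - 1"] that by (cases "t = 1") auto
      qed (use d(1,2) in auto)
      then show ?thesis using no_arrival False by simp
    qed
  qed
qed

section \<open>The stationary policy in closed form\<close>

text \<open>At time \<open>n + 1\<close>, \<open>age e n\<close> is the number of slots since the battery was last full.\<close>

fun age :: "(nat \<Rightarrow> bool) \<Rightarrow> nat \<Rightarrow> nat" where
  "age e 0 = 0"
| "age e (Suc n) = (if e (n + 2) then 0 else Suc (age e n))"

lemma age_cong: "(\<And>t. 1 \<le> t \<Longrightarrow> t \<le> Suc n \<Longrightarrow> e t = e' t) \<Longrightarrow> age e n = age e' n"
  by (induction n) auto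

locale stationary_rule =
  fixes B :: real and w :: nat and Afun :: "real \<Rightarrow> real"
  assumes B_pos: "0 < B" and w_pos: "1 \<le> w"
    and Afun_bounds: "\<And>b. 0 \<le> b \<Longrightarrow> b \<le> B \<Longrightarrow> 0 \<le> Afun b \<and> Afun b \<le> b"
begin

lemma ind_batt_bounds: "0 \<le> ind_batt B Afun j \<and> ind_batt B Afun j \<le> B"
  by (induction j) (use B_pos Afun_bounds in force)+

lemma induced_seq_bounds: "0 \<le> induced_seq B Afun j \<and> induced_seq B Afun j \<le> ind_batt B Afun j"
  using Afun_bounds ind_batt_bounds unfolding induced_seq_def by blast

lemma ind_batt_Suc_eq: "ind_batt B Afun (Suc k) = B - (\<Sum>i\<le>k. induced_seq B Afun i)"
  by (induction k) (simp_all add: induced_seq_def)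

lemma admissible_induced_seq: "admissible B (induced_seq B Afun)"
proof -
  let ?\<xi> = "induced_seq B Afun"
  have bounded: "(\<Sum>i<n. ?\<xi> i) \<le> B" for n
  proof (cases n)
    case (Suc k)
    then show ?thesis
      using ind_batt_Suc_eq[of k] ind_batt_bounds[of n] by (simp add: lessThan_Suc_atMost)
  qed (use B_pos in simp)
  have "summable ?\<xi>"
    using induced_seq_bounds bounded by (intro summableI_nonneg_bounded) auto
  then show ?thesis
    unfolding admissible_def using induced_seq_bounds bounded by (auto intro: suminf_le_const)
qed

text \<open>
  The energy spent by the policy, and the battery level, at a time \<open>i\<close> slots after the last full
  charge, when the first arrival seen in the window is \<open>d\<close> slots ahead (\<open>d = 0\<close>: none).
  When \<open>d \<noteq> 0\<close>, this arrival entered the window \<open>i + d - w\<close> slots after the charge (or was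
  already visible then); until that moment the policy followed \<open>Afun\<close>, and since then it has
  spread the remaining energy uniformly over the \<open>min (i + d) w\<close> slots before the arrival.
\<close>

definition spend :: "nat \<Rightarrow> nat \<Rightarrow> real" where
  "spend i d = (if d \<noteq> 0 then ind_batt B Afun (i + d - w) / real (min (i + d) w)
                else induced_seq B Afun i)"

definition level :: "nat \<Rightarrow> nat \<Rightarrow> real" where
  "level i d = (if d \<noteq> 0 then ind_batt B Afun (i + d - w) * real d / real (min (i + d) w)
                else ind_batt B Afun i)"

lemma spend_bounds: "0 \<le> spend i d \<and> spend i d \<le> B"
proof (cases "d = 0")
  case True
  then show ?thesis using induced_seq_bounds ind_batt_bounds by (auto simp: spend_def intro: order.trans)
next
  case False
  let ?X = "ind_batt B Afun (i + d - w)"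
  have "1 \<le> real (min (i + d) w)" using False w_pos by simp
  then have "?X / real (min (i + d) w) \<le> ?X"
    using ind_batt_bounds[of "i + d - w"] by (simp add: divide_le_eq mult_le_cancel_left1)
  then show ?thesis using False ind_batt_bounds[of "i + d - w"] by (simp add: spend_def)
qed

lemma spend_le_level: "spend i d \<le> level i d"
proof (cases "d = 0")
  case True
  then show ?thesis using induced_seq_bounds by (simp add: spend_def level_def)
next
  case False
  then show ?thesis using ind_batt_bounds[of "i + d - w"]
    by (simp add: spend_def level_def divide_right_mono mult_le_cancel_left1)
qed

lemma level_le_B:
  assumes "d \<le> w"
  shows "level i d \<le> B"
proof (cases "d = 0")
  case True
  then show ?thesis using ind_batt_bounds by (simp add: level_def)
next
  case False
  let ?X = "ind_batt B Afun (i + d - w)"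
  have "real d \<le> real (min (i + d) w)" "0 < real (min (i + d) w)" using assms False by auto
  then have "?X * real d / real (min (i + d) w) \<le> ?X"
    using ind_batt_bounds[of "i + d - w"] by (simp add: divide_le_eq mult_left_mono)
  then show ?thesis using False ind_batt_bounds[of "i + d - w"] by (simp add: level_def)
qed

lemma level_full_charge: "d \<le> w \<Longrightarrow> level 0 d = B"
  by (simp add: level_def)

lemma level_window_full: "level i w = level i 0"
  using w_pos by (simp add: level_def)

lemma level_minus_spend:
  assumes "d \<noteq> 1"
  shows "level i d - spend i d = level (Suc i) (d - 1)"
proof (cases "d = 0")
  case True
  then show ?thesis by (simp add: level_def spend_def induced_seq_def)
next
  case False
  then have "Suc i + (d - 1) = i + d" "real (d - 1) = real d - 1" using assms by auto
  then show ?thesis using False assms by (simp add: level_def spend_def diff_divide_distrib algebra_simps)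
qed

lemma stat_rule_level: "stat_rule w Afun e \<tau> (level i (win_dist w e \<tau>)) = spend i (win_dist w e \<tau>)"
  using win_dist_nonzero(1)[of w e \<tau>] by (simp add: stat_rule_def level_def spend_def induced_seq_def)

lemma sbatt_eq_level: "sbatt B w Afun e n = level (age e n) (win_dist w e (Suc n))"
proof (induction n)
  case 0
  show ?case using win_dist_nonzero(1)[of w e 1] by (cases "win_dist w e 1 = 0") (simp_all add: level_full_charge)
next
  case (Suc n)
  let ?i = "age e n" and ?d = "win_dist w e (Suc n)" and ?d' = "win_dist w e (Suc (Suc n))"
  have d'_le: "?d' \<le> w" using win_dist_nonzero(1)[of w e "Suc (Suc n)"] by (cases "?d' = 0") auto
  have step: "sbatt B w Afun e (Suc n)
      = min (level ?i ?d - spend ?i ?d + (if e (n + 2) then B else 0)) B"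
    using Suc.IH stat_rule_level by simp
  show ?case
  proof (cases "e (n + 2)")
    case True
    then show ?thesis using step spend_le_level[of ?i ?d] d'_le by (simp add: level_full_charge)
  next
    case False
    then have d_ne_1: "?d \<noteq> 1" using win_dist_eq_1_iff[OF w_pos] by (simp add: numeral_2_eq_2)
    have "level (Suc ?i) (?d - 1) = level (Suc ?i) ?d'"
    proof (cases "?d = 0")
      case True
      then show ?thesis using win_dist_Suc_of_zero[of w e "Suc n"] level_window_full by auto
    next
      case False
      then show ?thesis using win_dist_Suc_decrement[of w e "Suc n"] d_ne_1 by simp
    qed
    moreover have "level (Suc ?i) ?d' \<le> B" using d'_le by (rule level_le_B)
    ultimately show ?thesis using step False level_minus_spend[OF d_ne_1, of ?i] by simp
  qed
qed

lemma stat_policy_eq_spend: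
  "stat_policy B w Afun (Suc n) e u = spend (age e n) (win_dist w e (Suc n))"
  by (simp add: stat_policy_def sbatt_eq_level stat_rule_level)

lemma batt_stat_policy: "batt B (stat_policy B w Afun) e u n = sbatt B w Afun e n"
  by (induction n) (simp_all add: stat_policy_def)

lemma feasible_stat_policy: "feasible_policy B w (stat_policy B w Afun)"
proof -
  have causal: "stat_policy B w Afun \<tau> e u = stat_policy B w Afun \<tau> e' u"
    if \<tau>: "1 \<le> \<tau>" and same: "\<forall>t\<in>{1..\<tau> + w}. e t = e' t" for \<tau> e e' u
  proof -
    obtain n where n: "\<tau> = Suc n" using \<tau> by (cases \<tau>) auto
    have "age e n = age e' n" using same n by (intro age_cong) auto
    moreover have "win_dist w e (Suc n) = win_dist w e' (Suc n)" using same n by (intro win_dist_cong) auto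
    ultimately show ?thesis using n by (simp add: stat_policy_eq_spend)
  qed
  have bounded: "0 \<le> stat_policy B w Afun \<tau> e u
      \<and> stat_policy B w Afun \<tau> e u \<le> batt B (stat_policy B w Afun) e u (\<tau> - 1)"
    if \<tau>: "1 \<le> \<tau>" for \<tau> e u
  proof -
    obtain n where n: "\<tau> = Suc n" using \<tau> by (cases \<tau>) auto
    show ?thesis using spend_bounds spend_le_level n
      by (simp add: stat_policy_eq_spend batt_stat_policy sbatt_eq_level)
  qed
  have "stat_policy B w Afun \<tau> e \<in> borel_measurable borel" for \<tau> e
    unfolding stat_policy_def by simp
  then show ?thesis
    unfolding feasible_policy_def using causal bounded by blast
qed

lemma spend_no_arrival: "spend k 0 = induced_seq B Afun k"
  by (simp add: spend_def)

lemma spend_first_window: "m < w \<Longrightarrow> spend m (Suc 0) = B / real (Suc m)"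
  by (simp add: spend_def)

lemma spend_after_first_window: "spend (k + w) (Suc 0) = (B - (\<Sum>i\<le>k. induced_seq B Afun i)) / real w"
proof -
  have "k + w + Suc 0 - w = Suc k" "min (k + w + Suc 0) w = w" by auto
  then show ?thesis by (simp add: spend_def flip: ind_batt_Suc_eq)
qed

end

section \<open>Averaging over arrival histories\<close>

abbreviation histories :: "nat \<Rightarrow> bool list set" where
  "histories n \<equiv> {xs. length xs = n}"

lemma hist_prob_Nil [simp]: "hist_prob p [] = 1"
  by (simp add: hist_prob_def)

lemma hist_prob_Cons [simp]: "hist_prob p (b # xs) = (if b then p else 1 - p) * hist_prob p xs"
  by (simp add: hist_prob_def)

lemma hist_prob_append: "hist_prob p (xs @ ys) = hist_prob p xs * hist_prob p ys"
  by (simp add: hist_prob_def)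

lemma histories_0 [simp]: "histories 0 = {[]}"
  by auto

lemma sum_histories_Suc:
  "(\<Sum>xs\<in>histories (Suc n). F xs) = (\<Sum>xs\<in>histories n. F (True # xs) + F (False # xs))"
proof -
  have "histories (Suc n) = (\<lambda>(xs, b). b # xs) ` (histories n \<times> UNIV)"
    by (auto simp: length_Suc_conv)
  moreover have "inj_on (\<lambda>(xs, b). b # xs) (histories n \<times> UNIV)"
    by (auto simp: inj_on_def)
  ultimately have "(\<Sum>xs\<in>histories (Suc n). F xs) = (\<Sum>(xs, b)\<in>histories n \<times> UNIV. F (b # xs))"
    by (simp add: sum.reindex case_prod_beta')
  also have "\<dots> = (\<Sum>xs\<in>histories n. \<Sum>b\<in>UNIV. F (b # xs))"
    by (rule sum.cartesian_product[symmetric])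
  finally show ?thesis by (simp add: UNIV_bool add.commute)
qed

lemma sum_histories_add:
  "(\<Sum>xs\<in>histories (m + n). F xs) = (\<Sum>ys\<in>histories m. \<Sum>zs\<in>histories n. F (ys @ zs))"
  by (induction m arbitrary: F) (simp_all add: sum_histories_Suc sum.distrib)

lemma sum_hist_prob: "(\<Sum>xs\<in>histories n. hist_prob p xs) = 1"
proof (induction n)
  case (Suc n)
  have "(\<Sum>xs\<in>histories (Suc n). hist_prob p xs) = (\<Sum>xs\<in>histories n. hist_prob p xs)"
    by (simp add: sum_histories_Suc flip: distrib_right)
  then show ?case using Suc.IH by simp
qed simp

lemma sum_mult_affine:
  fixes a b :: "'a \<Rightarrow> real"
  shows "(\<Sum>x\<in>S. a x * (c + d * b x)) = c * (\<Sum>x\<in>S. a x) + d * (\<Sum>x\<in>S. a x * b x)"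
proof -
  have "(\<Sum>x\<in>S. a x * (c + d * b x)) = (\<Sum>x\<in>S. c * a x + d * (a x * b x))"
    by (intro sum.cong refl) (simp add: algebra_simps)
  then show ?thesis by (simp add: sum.distrib sum_distrib_left)
qed

lemma seq_of_append_left: "t \<le> length ys \<Longrightarrow> seq_of (ys @ zs) t = seq_of ys t"
  by (auto simp: seq_of_def nth_append)

lemma seq_of_append_right: "1 \<le> t \<Longrightarrow> seq_of (ys @ zs) (length ys + t) = seq_of zs t"
  by (cases t) (auto simp: seq_of_def nth_append)

lemma seq_of_Cons_Suc: "seq_of (b # zs) (Suc t) = (if t = 0 then b else seq_of zs t)"
  by (auto simp: seq_of_def)

text \<open>The mean of \<open>f K\<close>, where \<open>K\<close> is geometric (\<open>Pr(K = k) = p (1 - p)^k\<close>) and the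
  value \<open>f K\<close> is replaced by \<open>c\<close> once \<open>K \<ge> n\<close>.\<close>

definition trunc_geom_mean :: "real \<Rightarrow> nat \<Rightarrow> (nat \<Rightarrow> real) \<Rightarrow> real \<Rightarrow> real" where
  "trunc_geom_mean p n f c = (\<Sum>k<n. p * (1 - p) ^ k * f k) + (1 - p) ^ n * c"

lemma trunc_geom_mean_0 [simp]: "trunc_geom_mean p 0 f c = c"
  by (simp add: trunc_geom_mean_def)

lemma trunc_geom_mean_Suc:
  "trunc_geom_mean p (Suc n) f c = p * f 0 + (1 - p) * trunc_geom_mean p n (\<lambda>k. f (Suc k)) c"
  unfolding trunc_geom_mean_def sum.lessThan_Suc_shift
  by (simp add: distrib_left sum_distrib_left mult_ac)

lemma trunc_geom_mean_bounds:
  assumes "0 \<le> p" "p \<le> 1" "\<And>k. f k \<in> {a..b}" "c \<in> {a..b}"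
  shows "trunc_geom_mean p n f c \<in> {a..b}"
  using assms(3)
proof (induction n arbitrary: f)
  case (Suc n)
  then have "f 0 \<in> {a..b}" "trunc_geom_mean p n (\<lambda>k. f (Suc k)) c \<in> {a..b}" by auto
  then have "p * a + (1 - p) * a \<le> p * f 0 + (1 - p) * trunc_geom_mean p n (\<lambda>k. f (Suc k)) c"
    and "p * f 0 + (1 - p) * trunc_geom_mean p n (\<lambda>k. f (Suc k)) c \<le> p * b + (1 - p) * b"
    using assms(1,2) by (auto intro!: add_mono mult_left_mono)
  then show ?case by (simp add: trunc_geom_mean_Suc algebra_simps)
qed (use assms(4) in simp)

lemma sum_hist_prob_age:
  "(\<Sum>xs\<in>histories (Suc n). hist_prob p xs * f (age (seq_of xs) n)) = trunc_geom_mean p n f (f n)"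
proof (induction n arbitrary: f)
  case 0
  have "(\<Sum>xs\<in>histories 1. hist_prob p xs * f 0) = (\<Sum>xs\<in>histories 1. hist_prob p xs) * f 0"
    by (rule sum_distrib_right[symmetric])
  then show ?case by (simp add: sum_hist_prob)
next
  case (Suc n)
  have "(\<Sum>zs\<in>histories 1. hist_prob p (ys @ zs) * f (age (seq_of (ys @ zs)) (Suc n)))
      = hist_prob p ys * (p * f 0 + (1 - p) * f (Suc (age (seq_of ys) n)))"
    if "ys \<in> histories (Suc n)" for ys
  proof -
    have "seq_of (ys @ [b]) (Suc (Suc n)) = b" for b
      using that seq_of_append_right[of 1 ys "[b]"] by (simp add: seq_of_def)
    moreover have "age (seq_of (ys @ [b])) n = age (seq_of ys) n" for b
      using that by (intro age_cong) (simp add: seq_of_append_left)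
    moreover have "histories 1 = {[True], [False]}"
      by (auto simp: length_Suc_conv)
    ultimately show ?thesis by (simp add: hist_prob_append algebra_simps)
  qed
  then have "(\<Sum>xs\<in>histories (Suc n + 1). hist_prob p xs * f (age (seq_of xs) (Suc n)))
      = (\<Sum>ys\<in>histories (Suc n). hist_prob p ys * (p * f 0 + (1 - p) * f (Suc (age (seq_of ys) n))))"
    unfolding sum_histories_add by (rule sum.cong[OF refl])
  also have "\<dots> = p * f 0 + (1 - p) * (\<Sum>ys\<in>histories (Suc n). hist_prob p ys * f (Suc (age (seq_of ys) n)))"
    by (simp add: sum_mult_affine sum_hist_prob)
  also have "\<dots> = trunc_geom_mean p (Suc n) f (f (Suc n))"
    by (simp add: Suc.IH[of "\<lambda>k. f (Suc k)"] trunc_geom_mean_Suc)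
  finally show ?case by simp
qed

lemma sum_hist_prob_win_dist:
  "w \<le> M \<Longrightarrow> (\<Sum>zs\<in>histories M. hist_prob p zs * g (win_dist w (seq_of zs) 0))
     = trunc_geom_mean p w (\<lambda>t. g (Suc t)) (g 0)"
proof (induction w arbitrary: M g)
  case 0
  have "(\<Sum>zs\<in>histories M. hist_prob p zs * g 0) = (\<Sum>zs\<in>histories M. hist_prob p zs) * g 0"
    by (rule sum_distrib_right[symmetric])
  then show ?case by (simp add: sum_hist_prob)
next
  case (Suc w)
  then obtain M' where M: "M = Suc M'" "w \<le> M'" by (cases M) auto
  define g' where "g' d = (if d = 0 then g 0 else g (Suc d))" for d
  have win_dist_Cons: "win_dist (Suc w) (seq_of (b # zs)) 0 = (if b then 1 else
      if win_dist w (seq_of zs) 0 = 0 then 0 else Suc (win_dist w (seq_of zs) 0))" for b zs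
  proof -
    have "win_dist w (seq_of (b # zs)) (Suc 0) = win_dist w (seq_of zs) 0" for b
      by (rule win_dist_cong) (auto simp: seq_of_Cons_Suc)
    then show ?thesis by (simp add: win_dist_Suc_window seq_of_def)
  qed
  have "(\<Sum>zs\<in>histories M. hist_prob p zs * g (win_dist (Suc w) (seq_of zs) 0))
     = (\<Sum>zs\<in>histories M'. hist_prob p zs * (p * g 1 + (1 - p) * g' (win_dist w (seq_of zs) 0)))"
    unfolding M sum_histories_Suc by (intro sum.cong refl) (simp add: win_dist_Cons g'_def algebra_simps)
  also have "\<dots> = p * g 1 + (1 - p) * (\<Sum>zs\<in>histories M'. hist_prob p zs * g' (win_dist w (seq_of zs) 0))"
    by (simp add: sum_mult_affine sum_hist_prob)
  also have "\<dots> = trunc_geom_mean p (Suc w) (\<lambda>t. g (Suc t)) (g 0)"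
    using Suc.IH[OF M(2), of g'] by (simp add: trunc_geom_mean_Suc g'_def)
  finally show ?case .
qed

section \<open>Long-run throughput of a stationary policy\<close>

lemma summable_geometric_bound:
  fixes f :: "nat \<Rightarrow> real"
  assumes "0 \<le> q" "q < 1" "\<And>n. \<bar>f n\<bar> \<le> K * q ^ n"
  shows "summable f"
  by (rule summable_comparison_test[of f "\<lambda>n. K * q ^ n"])
     (use assms in \<open>auto intro: summable_mult summable_geometric\<close>)

lemma summable_geometric_tail_bounded:
  fixes f :: "nat \<Rightarrow> real"
  assumes "0 \<le> q" "q < 1" "0 \<le> c" "\<And>k. 0 \<le> f k" "\<And>k. f k \<le> C"
  shows "summable (\<lambda>k. c * q ^ (k + s) * f k)"
proof (rule summable_geometric_bound[of q _ "c * C"])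
  fix k
  have "\<bar>c * q ^ (k + s) * f k\<bar> = c * (q ^ (k + s) * f k)"
    using assms by (simp add: abs_mult)
  also have "\<dots> \<le> c * (q ^ k * C)"
    using assms by (intro mult_left_mono mult_mono) (auto simp: power_decreasing)
  finally show "\<bar>c * q ^ (k + s) * f k\<bar> \<le> c * C * q ^ k" by (simp add: mult_ac)
qed (use assms in auto)

lemma LIMSEQ_Cesaro_mean:
  fixes X :: "nat \<Rightarrow> real"
  assumes "X \<longlonglongrightarrow> L"
  shows "(\<lambda>T. (1 / real T) * (\<Sum>n<T. X n)) \<longlonglongrightarrow> L"
proof -
  have "(\<lambda>T. (1 / real T) * (\<Sum>n<T. X n - L)) \<longlonglongrightarrow> 0"
  proof (rule LIMSEQ_I)
    fix r :: real assume "0 < r"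
    then obtain N where N: "\<And>n. N \<le> n \<Longrightarrow> \<bar>X n - L\<bar> < r / 2"
      using LIMSEQ_D[OF assms, of "r / 2"] by auto
    define M where "M = (\<Sum>n<N. \<bar>X n - L\<bar>)"
    obtain K :: nat where K: "2 * M / r < real K" using reals_Archimedean2 by blast
    have "\<bar>(1 / real T) * (\<Sum>n<T. X n - L)\<bar> < r" if T: "max (Suc N) K \<le> T" for T
    proof -
      have "{..<T} = {..<N} \<union> {N..<T}" "{..<N} \<inter> {N..<T} = {}" using T by auto
      then have "\<bar>\<Sum>n<T. X n - L\<bar> \<le> (\<Sum>n<N. \<bar>X n - L\<bar>) + (\<Sum>n\<in>{N..<T}. \<bar>X n - L\<bar>)"
        by (metis finite_atLeastLessThan finite_lessThan sum.union_disjoint sum_abs)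
      also have "\<dots> \<le> M + real T * (r / 2)"
      proof -
        have "(\<Sum>n\<in>{N..<T}. \<bar>X n - L\<bar>) \<le> (\<Sum>n\<in>{N..<T}. r / 2)"
          using N by (intro sum_mono) (simp add: less_imp_le)
        also have "\<dots> \<le> real T * (r / 2)" using \<open>0 < r\<close> by simp
        finally show ?thesis by (simp add: M_def)
      qed
      also have "\<dots> < real T * r"
      proof -
        have "2 * M < real K * r" using K \<open>0 < r\<close> by (simp add: pos_divide_less_eq)
        moreover have "real K * r \<le> real T * r" using T \<open>0 < r\<close> by simp
        ultimately show ?thesis by linarith
      qed
      finally show ?thesis using T by (simp add: abs_mult divide_less_eq mult.commute)
    qed
    then show "\<exists>T0. \<forall>T\<ge>T0. norm ((1 / real T) * (\<Sum>n<T. X n - L) - 0) < r"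
      by (metis real_norm_def diff_zero)
  qed
  then have "(\<lambda>T. (1 / real T) * (\<Sum>n<T. X n - L) + L) \<longlonglongrightarrow> 0 + L"
    by (intro tendsto_add tendsto_const)
  moreover have "\<forall>\<^sub>F T in sequentially. (1 / real T) * (\<Sum>n<T. X n - L) + L = (1 / real T) * (\<Sum>n<T. X n)"
    by (rule eventually_sequentiallyI[of 1]) (simp add: sum_subtractf field_simps)
  ultimately show ?thesis by (simp add: tendsto_cong)
qed

lemma log2_one_plus_bounds:
  fixes \<gamma> u v :: real
  assumes "0 \<le> \<gamma>" "0 \<le> v" "v \<le> u"
  shows "0 \<le> log 2 (1 + \<gamma> * v) \<and> log 2 (1 + \<gamma> * v) \<le> log 2 (1 + \<gamma> * u)"
proof -
  have "0 \<le> \<gamma> * v" "\<gamma> * v \<le> \<gamma> * u" using assms by (auto intro: mult_left_mono)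
  then show ?thesis by simp
qed

lemma sum_triangle_shift:
  fixes a :: "nat \<Rightarrow> real"
  shows "(\<Sum>t<w. \<Sum>k<w - t. a (k + t)) = (\<Sum>m<w. real (Suc m) * a m)"
proof (induction w)
  case (Suc w)
  have "(\<Sum>t<Suc w. \<Sum>k<Suc w - t. a (k + t)) = (\<Sum>t<Suc w. (\<Sum>k<w - t. a (k + t)) + a w)"
  proof (intro sum.cong refl)
    fix t assume "t \<in> {..<Suc w}"
    then have "Suc w - t = Suc (w - t)" "w - t + t = w" by auto
    then show "(\<Sum>k<Suc w - t. a (k + t)) = (\<Sum>k<w - t. a (k + t)) + a w" by simp
  qed
  then show ?case using Suc.IH by (simp add: sum.distrib)
qed simp

locale stationary_throughput = stationary_rule +
  fixes p \<gamma> :: real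
  assumes p_pos: "0 < p" and p_lt_1: "p < 1" and \<gamma>_pos: "0 < \<gamma>"
begin

definition reward :: "nat \<Rightarrow> nat \<Rightarrow> real" where
  "reward i d = log 2 (1 + \<gamma> * spend i d) / 2"

definition age_reward :: "nat \<Rightarrow> real" where
  "age_reward i = trunc_geom_mean p w (\<lambda>t. reward i (Suc t)) (reward i 0)"

definition slot_reward :: "nat \<Rightarrow> real" where
  "slot_reward n = trunc_geom_mean p n age_reward (age_reward n)"

text \<open>The age at time \<open>n + 1\<close> depends only on the first \<open>n + 1\<close> arrivals and the window only on
  the later ones, so the expectation factors through \<open>sum_histories_add\<close>.\<close>

lemma expected_reward_eq_slot_reward:
  assumes "Suc n + w \<le> N"
  shows "(\<Sum>xs\<in>histories N. hist_prob p xs * reward (age (seq_of xs) n) (win_dist w (seq_of xs) (Suc n)))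
    = slot_reward n"
proof -
  define M where "M = N - Suc n"
  have NM: "N = Suc n + M" "w \<le> M" using assms by (auto simp: M_def)
  have "(\<Sum>xs\<in>histories N. hist_prob p xs * reward (age (seq_of xs) n) (win_dist w (seq_of xs) (Suc n)))
      = (\<Sum>ys\<in>histories (Suc n). hist_prob p ys *
           (\<Sum>zs\<in>histories M. hist_prob p zs * reward (age (seq_of ys) n) (win_dist w (seq_of zs) 0)))"
    unfolding NM(1) sum_histories_add
  proof (intro sum.cong refl)
    fix ys :: "bool list" assume "ys \<in> histories (Suc n)"
    then have len: "length ys = Suc n" by simp
    have "age (seq_of (ys @ zs)) n = age (seq_of ys) n" for zs
      using len by (intro age_cong) (simp add: seq_of_append_left)
    moreover have "win_dist w (seq_of (ys @ zs)) (Suc n) = win_dist w (seq_of zs) 0" for zs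
    proof (rule win_dist_cong)
      fix t :: nat assume "t \<in> {1..w}"
      then show "seq_of (ys @ zs) (Suc n + t) = seq_of zs (0 + t)"
        using seq_of_append_right[of t ys zs] len by simp
    qed
    ultimately show "(\<Sum>zs\<in>histories M. hist_prob p (ys @ zs)
          * reward (age (seq_of (ys @ zs)) n) (win_dist w (seq_of (ys @ zs)) (Suc n)))
        = hist_prob p ys * (\<Sum>zs\<in>histories M. hist_prob p zs * reward (age (seq_of ys) n) (win_dist w (seq_of zs) 0))"
      by (simp add: hist_prob_append sum_distrib_left mult.assoc)
  qed
  also have "\<dots> = (\<Sum>ys\<in>histories (Suc n). hist_prob p ys * age_reward (age (seq_of ys) n))"
    using sum_hist_prob_win_dist[OF NM(2)] by (simp add: age_reward_def)
  also have "\<dots> = slot_reward n"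
    by (simp add: sum_hist_prob_age slot_reward_def)
  finally show ?thesis .
qed

lemma avg_throughput_eq_mean_slot_reward:
  assumes "1 \<le> T"
  shows "avg_throughput p \<gamma> w (stat_policy B w Afun) T = (1 / real T) * (\<Sum>n<T. slot_reward n)"
proof -
  have "(\<Sum>\<tau>=1..T. log 2 (1 + \<gamma> * stat_policy B w Afun \<tau> (seq_of xs) u) / 2)
      = (\<Sum>n<T. reward (age (seq_of xs) n) (win_dist w (seq_of xs) (Suc n)))" for xs u
    by (simp add: sum.atLeast1_atMost_eq stat_policy_eq_spend reward_def)
  then have "avg_throughput p \<gamma> w (stat_policy B w Afun) T
      = (1 / real T) * (\<Sum>n<T. \<Sum>xs\<in>histories (T + w). hist_prob p xs *
          reward (age (seq_of xs) n) (win_dist w (seq_of xs) (Suc n)))"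
    by (simp add: avg_throughput_def set_integral_const sum_distrib_left sum.swap[of _ "{..<T}"])
  also have "\<dots> = (1 / real T) * (\<Sum>n<T. slot_reward n)"
    by (simp add: expected_reward_eq_slot_reward)
  finally show ?thesis .
qed

lemma reward_bounds: "reward i d \<in> {0..log 2 (1 + \<gamma> * B) / 2}"
  using log2_one_plus_bounds[of \<gamma> "spend i d" B] spend_bounds[of i d] \<gamma>_pos by (simp add: reward_def)

lemma age_reward_bounds: "age_reward i \<in> {0..log 2 (1 + \<gamma> * B) / 2}"
  unfolding age_reward_def using p_pos p_lt_1 reward_bounds by (intro trunc_geom_mean_bounds) auto

lemma summable_age_reward: "summable (\<lambda>k. p * (1 - p) ^ k * age_reward k)"
  using summable_geometric_tail_bounded[of "1 - p" p age_reward "log 2 (1 + \<gamma> * B) / 2" 0]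
    p_pos p_lt_1 age_reward_bounds by simp

lemma avg_throughput_tendsto:
  "(\<lambda>T. avg_throughput p \<gamma> w (stat_policy B w Afun) T) \<longlonglongrightarrow> (\<Sum>k. p * (1 - p) ^ k * age_reward k)"
proof -
  have "(\<lambda>n. (1 - p) ^ n * age_reward n) \<longlonglongrightarrow> 0"
  proof (rule Lim_null_comparison)
    show "\<forall>\<^sub>F n in sequentially. norm ((1 - p) ^ n * age_reward n) \<le> (1 - p) ^ n * (log 2 (1 + \<gamma> * B) / 2)"
      using age_reward_bounds p_lt_1 by (auto simp: abs_mult intro!: mult_left_mono)
    show "(\<lambda>n. (1 - p) ^ n * (log 2 (1 + \<gamma> * B) / 2)) \<longlonglongrightarrow> 0"
      using p_pos p_lt_1 by (intro tendsto_mult_left_zero LIMSEQ_power_zero) auto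
  qed
  then have "slot_reward \<longlonglongrightarrow> (\<Sum>k. p * (1 - p) ^ k * age_reward k) + 0"
    unfolding slot_reward_def[abs_def] trunc_geom_mean_def
    by (intro tendsto_add summable_LIMSEQ summable_age_reward)
  then have "(\<lambda>T. (1 / real T) * (\<Sum>n<T. slot_reward n)) \<longlonglongrightarrow> (\<Sum>k. p * (1 - p) ^ k * age_reward k)"
    by (intro LIMSEQ_Cesaro_mean) simp
  moreover have "\<forall>\<^sub>F T in sequentially.
      (1 / real T) * (\<Sum>n<T. slot_reward n) = avg_throughput p \<gamma> w (stat_policy B w Afun) T"
    by (rule eventually_sequentiallyI[of 1]) (simp add: avg_throughput_eq_mean_slot_reward)
  ultimately show ?thesis by (rule Lim_transform_eventually)
qed

text \<open>Conditioning on the age \<open>k\<close> and on the window, the reward of a slot is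
  \<open>reward (k + t) 1\<close> if the next arrival comes \<open>t + 1 \<le> w\<close> slots later and \<open>reward k 0\<close> otherwise;
  regrouping by \<open>k + t\<close> turns the long-run throughput into \<open>T_inf\<close>.\<close>

definition arrival_term :: "nat \<Rightarrow> real" where
  "arrival_term m = p\<^sup>2 * (1 - p) ^ m * reward m (Suc 0)"

lemma summable_arrival_term_shift: "summable (\<lambda>k. arrival_term (k + t))"
  using summable_geometric_tail_bounded[of "1 - p" "p\<^sup>2" "\<lambda>k. reward (k + t) (Suc 0)"
      "log 2 (1 + \<gamma> * B) / 2" t] p_pos p_lt_1 reward_bounds
  by (simp add: arrival_term_def add.commute)

lemma summable_no_arrival_term: "summable (\<lambda>k. p * (1 - p) ^ (k + w) * reward k 0)"
  using summable_geometric_tail_bounded[of "1 - p" p "\<lambda>k. reward k 0" "log 2 (1 + \<gamma> * B) / 2" w]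
    p_pos p_lt_1 reward_bounds by simp

lemma series_age_reward_split:
  "(\<Sum>k. p * (1 - p) ^ k * age_reward k)
     = (\<Sum>k. \<Sum>t<w. arrival_term (k + t)) + (\<Sum>k. p * (1 - p) ^ (k + w) * reward k 0)"
proof -
  have "p * (1 - p) ^ k * age_reward k = (\<Sum>t<w. arrival_term (k + t)) + p * (1 - p) ^ (k + w) * reward k 0" for k
  proof -
    have "p * (1 - p) ^ k * age_reward k
        = (\<Sum>t<w. p * (1 - p) ^ k * (p * (1 - p) ^ t * reward k (Suc t))) + p * (1 - p) ^ k * ((1 - p) ^ w * reward k 0)"
      unfolding age_reward_def trunc_geom_mean_def distrib_left sum_distrib_left ..
    also have "(\<Sum>t<w. p * (1 - p) ^ k * (p * (1 - p) ^ t * reward k (Suc t))) = (\<Sum>t<w. arrival_term (k + t))"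
    proof (intro sum.cong refl)
      fix t
      have "reward k (Suc t) = reward (k + t) (Suc 0)" by (simp add: reward_def spend_def)
      then show "p * (1 - p) ^ k * (p * (1 - p) ^ t * reward k (Suc t)) = arrival_term (k + t)"
        by (simp add: arrival_term_def power_add power2_eq_square mult_ac)
    qed
    also have "p * (1 - p) ^ k * ((1 - p) ^ w * reward k 0) = p * (1 - p) ^ (k + w) * reward k 0"
      by (simp only: power_add mult_ac)
    finally show ?thesis .
  qed
  moreover have "summable (\<lambda>k. \<Sum>t<w. arrival_term (k + t))"
    by (intro summable_sum summable_arrival_term_shift)
  ultimately show ?thesis
    using suminf_add[OF _ summable_no_arrival_term] by simp
qed

lemma series_arrival_terms:
  "(\<Sum>k. \<Sum>t<w. arrival_term (k + t))
     = (\<Sum>m<w. real (Suc m) * arrival_term m) + real w * (\<Sum>k. arrival_term (k + w))"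
proof -
  have "(\<Sum>k. \<Sum>t<w. arrival_term (k + t)) = (\<Sum>t<w. \<Sum>k. arrival_term (k + t))"
    by (rule suminf_sum) (rule summable_arrival_term_shift)
  also have "\<dots> = (\<Sum>t<w. (\<Sum>k<w - t. arrival_term (k + t)) + (\<Sum>k. arrival_term (k + w)))"
  proof (intro sum.cong refl)
    fix t assume "t \<in> {..<w}"
    then have "(\<Sum>k. arrival_term (k + (w - t) + t)) = (\<Sum>k. arrival_term (k + w))" by simp
    then show "(\<Sum>k. arrival_term (k + t)) = (\<Sum>k<w - t. arrival_term (k + t)) + (\<Sum>k. arrival_term (k + w))"
      using suminf_split_initial_segment[OF summable_arrival_term_shift[of t], of "w - t"] by simp
  qed
  also have "\<dots> = (\<Sum>m<w. real (Suc m) * arrival_term m) + real w * (\<Sum>k. arrival_term (k + w))"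
    by (simp add: sum.distrib sum_triangle_shift)
  finally show ?thesis .
qed

lemma series_age_reward_eq_T_inf:
  "(\<Sum>k. p * (1 - p) ^ k * age_reward k) = T_inf p \<gamma> B w (induced_seq B Afun)"
proof -
  have first: "(\<Sum>m<w. real (Suc m) * arrival_term m)
      = (\<Sum>k=1..w. p\<^sup>2 * (1 - p) ^ (k - 1) * (real k / 2) * log 2 (1 + \<gamma> * B / real k))"
  proof -
    have "(\<Sum>m<w. real (Suc m) * arrival_term m)
        = (\<Sum>m<w. p\<^sup>2 * (1 - p) ^ m * (real (Suc m) / 2) * log 2 (1 + \<gamma> * B / real (Suc m)))"
    proof (intro sum.cong refl)
      fix m assume "m \<in> {..<w}"
      then show "real (Suc m) * arrival_term m
          = p\<^sup>2 * (1 - p) ^ m * (real (Suc m) / 2) * log 2 (1 + \<gamma> * B / real (Suc m))"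
        by (simp add: arrival_term_def reward_def spend_first_window)
    qed
    then show ?thesis by (simp add: sum.atLeast1_atMost_eq)
  qed
  have "real w * (\<Sum>k. arrival_term (k + w)) = (\<Sum>k. real w * arrival_term (k + w))"
    by (rule suminf_mult[symmetric]) (rule summable_arrival_term_shift)
  also have "\<dots> = (\<Sum>k. p\<^sup>2 * (1 - p) ^ (k + w) * (real w / 2)
      * log 2 (1 + \<gamma> * (B - (\<Sum>i\<le>k. induced_seq B Afun i)) / real w))"
    by (simp add: arrival_term_def reward_def spend_after_first_window mult_ac)
  finally have later: "real w * (\<Sum>k. arrival_term (k + w)) = \<dots>" .
  have none: "(\<Sum>k. p * (1 - p) ^ (k + w) * reward k 0)
      = (\<Sum>j. p * (1 - p) ^ (j + w) * (log 2 (1 + \<gamma> * induced_seq B Afun j) / 2))"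
    by (simp add: reward_def spend_no_arrival)
  show ?thesis
    unfolding series_age_reward_split series_arrival_terms first later none T_inf_def by simp
qed

lemma liminf_avg_throughput:
  "liminf (\<lambda>T. ereal (avg_throughput p \<gamma> w (stat_policy B w Afun) T))
     = ereal (T_inf p \<gamma> B w (induced_seq B Afun))"
proof -
  have "(\<lambda>T. ereal (avg_throughput p \<gamma> w (stat_policy B w Afun) T))
      \<longlonglongrightarrow> ereal (T_inf p \<gamma> B w (induced_seq B Afun))"
    using avg_throughput_tendsto unfolding series_age_reward_eq_T_inf by (rule tendsto_ereal)
  then show ?thesis by (intro lim_imp_Liminf) simp_all
qed

end

section \<open>The objective \<open>T_inf\<close>\<close>

lemma log2_concave_combination:
  fixes a b t :: real
  assumes "0 < a" "0 < b" "0 \<le> t" "t \<le> 1"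
  shows "(1 - t) * log 2 a + t * log 2 b \<le> log 2 ((1 - t) * a + t * b)"
proof -
  have "concave_on {0<..} (log 2)" by (rule log_concave) simp
  from concave_onD[OF this, of t a b] show ?thesis using assms by simp
qed

lemma log2_midpoint_strict:
  fixes a b :: real
  assumes "0 < a" "0 < b" "a \<noteq> b"
  shows "(log 2 a + log 2 b) / 2 < log 2 ((a + b) / 2)"
proof -
  have "0 < (a - b)\<^sup>2" using assms by simp
  then have "a * b < ((a + b) / 2)\<^sup>2" by (simp add: power2_eq_square field_simps)
  then have "log 2 (a * b) < log 2 (((a + b) / 2)\<^sup>2)"
    using assms by simp
  then show ?thesis using assms by (simp add: log_mult log_nat_power)
qed

lemma suminf_by_parts:
  fixes h d t :: "nat \<Rightarrow> real"
  assumes tail: "\<And>m. t m = h m + t (Suc m)" and "t \<longlonglongrightarrow> 0"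
    and bounded: "\<And>n. \<bar>\<Sum>i<n. d i\<bar> \<le> C"
    and "summable (\<lambda>k. h k * (\<Sum>i\<le>k. d i))" and "summable (\<lambda>j. d j * t j)"
  shows "(\<Sum>j. d j * t j) = (\<Sum>k. h k * (\<Sum>i\<le>k. d i))"
proof -
  have partial: "(\<Sum>k<n. h k * (\<Sum>i\<le>k. d i)) = (\<Sum>i<n. d i * t i) - t n * (\<Sum>i<n. d i)" for n
  proof (induction n)
    case (Suc n)
    have "(\<Sum>i\<le>n. d i) = (\<Sum>i<n. d i) + d n" by (simp flip: lessThan_Suc_atMost)
    then show ?case using Suc.IH tail[of n] by (simp add: algebra_simps)
  qed simp
  have "(\<lambda>n. t n * (\<Sum>i<n. d i)) \<longlonglongrightarrow> 0"
  proof (rule Lim_null_comparison)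
    show "\<forall>\<^sub>F n in sequentially. norm (t n * (\<Sum>i<n. d i)) \<le> \<bar>t n\<bar> * C"
      using bounded by (simp add: abs_mult mult_left_mono)
    show "(\<lambda>n. \<bar>t n\<bar> * C) \<longlonglongrightarrow> 0"
      using \<open>t \<longlonglongrightarrow> 0\<close> by (intro tendsto_mult_left_zero tendsto_rabs_zero)
  qed
  then have "(\<lambda>n. \<Sum>k<n. h k * (\<Sum>i\<le>k. d i)) \<longlonglongrightarrow> (\<Sum>j. d j * t j) - 0"
    unfolding partial using assms(5) by (intro tendsto_diff summable_LIMSEQ)
  moreover have "(\<lambda>n. \<Sum>k<n. h k * (\<Sum>i\<le>k. d i)) \<longlonglongrightarrow> (\<Sum>k. h k * (\<Sum>i\<le>k. d i))"
    using assms(4) by (rule summable_LIMSEQ)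
  ultimately show ?thesis using LIMSEQ_unique by fastforce
qed

lemma log2_tangent:
  fixes a b :: real
  assumes "0 < a" "0 < b"
  shows "log 2 b - log 2 a \<le> (b - a) / a / ln 2"
proof -
  have "ln (b / a) \<le> b / a - 1" using assms by (intro ln_le_minus_one) simp
  then have "(ln b - ln a) / ln 2 \<le> (b - a) / a / ln 2"
    using assms by (intro divide_right_mono) (simp_all add: ln_div diff_divide_distrib)
  then show ?thesis by (simp add: log_def diff_divide_distrib)
qed

lemma DERIV_pos_right_increase:
  fixes f :: "real \<Rightarrow> real"
  assumes "(f has_real_derivative D) (at 0)" "0 < D" "0 < \<delta>"
  obtains h where "0 < h" "h \<le> \<delta>" "f 0 < f h"
proof -
  obtain d where "0 < d" "\<And>h. 0 < h \<Longrightarrow> h < d \<Longrightarrow> f 0 < f (0 + h)"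
    using DERIV_pos_inc_right[OF assms(1,2)] by blast
  then show ?thesis using that[of "min (d / 2) \<delta>"] assms(3) by simp
qed

lemma DERIV_neg_left_increase:
  fixes f :: "real \<Rightarrow> real"
  assumes "(f has_real_derivative D) (at 0)" "D < 0" "0 < \<delta>"
  obtains h where "0 < h" "h \<le> \<delta>" "f 0 < f (- h)"
proof -
  obtain d where "0 < d" "\<And>h. 0 < h \<Longrightarrow> h < d \<Longrightarrow> f 0 < f (0 - h)"
    using DERIV_neg_dec_left[OF assms(1,2)] by blast
  then show ?thesis using that[of "min (d / 2) \<delta>"] assms(3) by simp
qed

lemma DERIV_log2_affine:
  fixes a b :: real
  assumes "0 < a"
  shows "((\<lambda>e. log 2 (a + b * e)) has_real_derivative b / (ln 2 * a)) (at 0)"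
  using assms by (auto intro!: derivative_eq_intros simp: field_simps)

locale lookahead =
  fixes p \<gamma> B :: real and w :: nat
  assumes p_pos: "0 < p" and p_lt_1: "p < 1" and \<gamma>_pos: "0 < \<gamma>" and B_pos: "0 < B"
    and w_pos: "1 \<le> w"
begin

abbreviation T :: "(nat \<Rightarrow> real) \<Rightarrow> real" where
  "T x \<equiv> T_inf p \<gamma> B w x"

definition residual :: "(nat \<Rightarrow> real) \<Rightarrow> nat \<Rightarrow> real" where
  "residual x k = B - (\<Sum>i\<le>k. x i)"

definition spend_term :: "(nat \<Rightarrow> real) \<Rightarrow> nat \<Rightarrow> real" where
  "spend_term x j = p * (1 - p) ^ (j + w) * (log 2 (1 + \<gamma> * x j) / 2)"

definition residual_term :: "(nat \<Rightarrow> real) \<Rightarrow> nat \<Rightarrow> real" where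
  "residual_term x k = p\<^sup>2 * (1 - p) ^ (k + w) * (real w / 2) * log 2 (1 + \<gamma> * residual x k / real w)"

definition window_term :: real where
  "window_term = (\<Sum>k=1..w. p\<^sup>2 * (1 - p) ^ (k - 1) * (real k / 2) * log 2 (1 + \<gamma> * B / real k))"

lemma T_eq: "T x = window_term + suminf (spend_term x) + suminf (residual_term x)"
  unfolding T_inf_def window_term_def spend_term_def[abs_def] residual_term_def[abs_def] residual_def ..

lemma w_real_pos: "0 < real w"
  using w_pos by simp

lemma admissible_bounds:
  assumes "admissible B x"
  shows "0 \<le> x j" "x j \<le> B" "0 \<le> residual x k" "residual x k \<le> B"
    "(\<Sum>i\<le>k. x i) \<le> suminf x" "0 \<le> (\<Sum>i<n. x i)" "(\<Sum>i<n. x i) \<le> B"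
proof -
  have nonneg: "\<And>j. 0 \<le> x j" and "summable x" "suminf x \<le> B"
    using assms unfolding admissible_def by auto
  then have partial: "(\<Sum>i\<in>I. x i) \<le> suminf x" if "finite I" for I
    using that by (intro sum_le_suminf) auto
  show "0 \<le> x j" "(\<Sum>i\<le>k. x i) \<le> suminf x" "0 \<le> (\<Sum>i<n. x i)"
    using nonneg partial by (auto intro: sum_nonneg)
  show "x j \<le> B" using partial[of "{j}"] \<open>suminf x \<le> B\<close> by simp
  show "0 \<le> residual x k" using partial[of "{..k}"] \<open>suminf x \<le> B\<close> by (simp add: residual_def)
  show "residual x k \<le> B" using nonneg by (simp add: residual_def sum_nonneg)
  show "(\<Sum>i<n. x i) \<le> B" using partial[of "{..<n}"] \<open>suminf x \<le> B\<close> by simp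
qed

lemma one_plus_pos:
  assumes "admissible B x"
  shows "0 < 1 + \<gamma> * x j" and "0 < 1 + \<gamma> * residual x k / real w"
  using admissible_bounds(1,3)[OF assms] \<gamma>_pos w_real_pos by (auto intro: add_pos_nonneg)

lemma summable_spend_term:
  assumes "admissible B x"
  shows "summable (spend_term x)"
proof -
  have bounds: "0 \<le> log 2 (1 + \<gamma> * x j) / 2" "log 2 (1 + \<gamma> * x j) / 2 \<le> log 2 (1 + \<gamma> * B) / 2" for j
    using log2_one_plus_bounds[of \<gamma> "x j" B] admissible_bounds(1,2)[OF assms, of j] \<gamma>_pos by auto
  show ?thesis
    unfolding spend_term_def[abs_def]
    by (rule summable_geometric_tail_bounded[where C = "log 2 (1 + \<gamma> * B) / 2"])
      (use bounds p_pos p_lt_1 in auto)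
qed

lemma summable_residual_term:
  assumes "admissible B x"
  shows "summable (residual_term x)"
proof -
  have "residual x k / real w \<le> residual x k / 1" for k
    using admissible_bounds(3)[OF assms] w_pos by (intro divide_left_mono) auto
  then have "0 \<le> residual x k / real w" "residual x k / real w \<le> B" for k
    using admissible_bounds(3,4)[OF assms, of k] w_real_pos by (auto intro: order.trans)
  then have bounds: "0 \<le> log 2 (1 + \<gamma> * residual x k / real w)"
    "log 2 (1 + \<gamma> * residual x k / real w) \<le> log 2 (1 + \<gamma> * B)" for k
    using log2_one_plus_bounds[of \<gamma> "residual x k / real w" B] \<gamma>_pos by auto
  have "summable (\<lambda>k. (p\<^sup>2 * (real w / 2)) * (1 - p) ^ (k + w) * log 2 (1 + \<gamma> * residual x k / real w))"
    by (rule summable_geometric_tail_bounded[where C = "log 2 (1 + \<gamma> * B)"])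
      (use bounds p_pos p_lt_1 in auto)
  then show ?thesis unfolding residual_term_def[abs_def] by (simp add: mult_ac)
qed

lemma T_diff:
  assumes "admissible B x" "admissible B y"
  shows "T y - T x = (\<Sum>j. spend_term y j - spend_term x j) + (\<Sum>k. residual_term y k - residual_term x k)"
proof -
  have "T y - T x = (suminf (spend_term y) - suminf (spend_term x))
      + (suminf (residual_term y) - suminf (residual_term x))"
    unfolding T_eq by simp
  then show ?thesis
    using assms by (simp add: suminf_diff summable_spend_term summable_residual_term)
qed

definition mix :: "real \<Rightarrow> (nat \<Rightarrow> real) \<Rightarrow> (nat \<Rightarrow> real) \<Rightarrow> nat \<Rightarrow> real" where
  "mix t x y j = (1 - t) * x j + t * y j"

lemma admissible_mix:
  assumes x: "admissible B x" and y: "admissible B y" and t: "0 \<le> t" "t \<le> 1"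
  shows "admissible B (mix t x y)"
proof -
  have sx: "summable x" and sy: "summable y" using x y by (auto simp: admissible_def)
  then have "mix t x y sums ((1 - t) * suminf x + t * suminf y)"
    unfolding mix_def[abs_def] by (intro sums_add sums_mult summable_sums)
  moreover have "(1 - t) * suminf x + t * suminf y \<le> (1 - t) * B + t * B"
    using x y t by (intro add_mono mult_left_mono) (auto simp: admissible_def)
  moreover have "0 \<le> mix t x y j" for j
    using admissible_bounds(1)[OF x, of j] admissible_bounds(1)[OF y, of j] t by (simp add: mix_def)
  ultimately show ?thesis by (auto simp: admissible_def sums_iff algebra_simps)
qed

lemma residual_mix: "residual (mix t x y) k = (1 - t) * residual x k + t * residual y k"
proof -
  have "(\<Sum>i\<le>k. mix t x y i) = (1 - t) * (\<Sum>i\<le>k. x i) + t * (\<Sum>i\<le>k. y i)"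
    by (simp add: mix_def sum.distrib sum_distrib_left)
  then show ?thesis by (simp add: residual_def algebra_simps)
qed

lemma spend_term_mix:
  assumes "admissible B x" "admissible B y" "0 \<le> t" "t \<le> 1"
  shows "(1 - t) * spend_term x j + t * spend_term y j \<le> spend_term (mix t x y) j"
proof -
  have "1 + \<gamma> * mix t x y j = (1 - t) * (1 + \<gamma> * x j) + t * (1 + \<gamma> * y j)"
    by (simp add: mix_def algebra_simps)
  then have "(1 - t) * log 2 (1 + \<gamma> * x j) + t * log 2 (1 + \<gamma> * y j) \<le> log 2 (1 + \<gamma> * mix t x y j)"
    using log2_concave_combination one_plus_pos(1) assms by simp
  then have "p * (1 - p) ^ (j + w) / 2 * ((1 - t) * log 2 (1 + \<gamma> * x j) + t * log 2 (1 + \<gamma> * y j))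
      \<le> p * (1 - p) ^ (j + w) / 2 * log 2 (1 + \<gamma> * mix t x y j)"
    using p_pos p_lt_1 by (intro mult_left_mono) auto
  moreover have "(1 - t) * spend_term x j + t * spend_term y j
      = p * (1 - p) ^ (j + w) / 2 * ((1 - t) * log 2 (1 + \<gamma> * x j) + t * log 2 (1 + \<gamma> * y j))"
    by (simp add: spend_term_def field_simps)
  ultimately show ?thesis by (simp add: spend_term_def)
qed

lemma residual_term_mix:
  assumes "admissible B x" "admissible B y" "0 \<le> t" "t \<le> 1"
  shows "(1 - t) * residual_term x k + t * residual_term y k \<le> residual_term (mix t x y) k"
proof -
  have "1 + \<gamma> * residual (mix t x y) k / real w
      = (1 - t) * (1 + \<gamma> * residual x k / real w) + t * (1 + \<gamma> * residual y k / real w)"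
    using w_real_pos by (simp add: residual_mix field_simps)
  then have "(1 - t) * log 2 (1 + \<gamma> * residual x k / real w) + t * log 2 (1 + \<gamma> * residual y k / real w)
      \<le> log 2 (1 + \<gamma> * residual (mix t x y) k / real w)"
    using log2_concave_combination one_plus_pos(2) assms by simp
  then have "p\<^sup>2 * (1 - p) ^ (k + w) * (real w / 2) *
        ((1 - t) * log 2 (1 + \<gamma> * residual x k / real w) + t * log 2 (1 + \<gamma> * residual y k / real w))
      \<le> p\<^sup>2 * (1 - p) ^ (k + w) * (real w / 2) * log 2 (1 + \<gamma> * residual (mix t x y) k / real w)"
    using p_pos p_lt_1 by (intro mult_left_mono) auto
  moreover have "(1 - t) * residual_term x k + t * residual_term y k
      = p\<^sup>2 * (1 - p) ^ (k + w) * (real w / 2) *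
        ((1 - t) * log 2 (1 + \<gamma> * residual x k / real w) + t * log 2 (1 + \<gamma> * residual y k / real w))"
    by (simp add: residual_term_def field_simps)
  ultimately show ?thesis by (simp add: residual_term_def)
qed

lemma T_mix_excess:
  assumes x: "admissible B x" and y: "admissible B y" and t: "0 \<le> t" "t \<le> 1"
  shows "T (mix t x y) - ((1 - t) * T x + t * T y)
    = (\<Sum>j. spend_term (mix t x y) j - ((1 - t) * spend_term x j + t * spend_term y j))
    + (\<Sum>k. residual_term (mix t x y) k - ((1 - t) * residual_term x k + t * residual_term y k))"
proof -
  have z: "admissible B (mix t x y)" by (rule admissible_mix[OF x y t])
  have comb: "(1 - t) * suminf f + t * suminf g = (\<Sum>j. (1 - t) * f j + t * g j)"
    if "summable f" "summable g" for f g :: "nat \<Rightarrow> real"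
  proof -
    have "(\<Sum>j. (1 - t) * f j + t * g j) = (\<Sum>j. (1 - t) * f j) + (\<Sum>j. t * g j)"
      using that by (intro suminf_add[symmetric] summable_mult)
    then show ?thesis using that by (simp add: suminf_mult)
  qed
  have "(1 - t) * T x + t * T y = window_term
      + ((1 - t) * suminf (spend_term x) + t * suminf (spend_term y))
      + ((1 - t) * suminf (residual_term x) + t * suminf (residual_term y))"
    unfolding T_eq by (simp add: algebra_simps)
  also have "\<dots> = window_term + (\<Sum>j. (1 - t) * spend_term x j + t * spend_term y j)
      + (\<Sum>k. (1 - t) * residual_term x k + t * residual_term y k)"
    using x y by (simp only: comb summable_spend_term summable_residual_term)
  finally have "T (mix t x y) - ((1 - t) * T x + t * T y)
      = (suminf (spend_term (mix t x y)) - (\<Sum>j. (1 - t) * spend_term x j + t * spend_term y j))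
      + (suminf (residual_term (mix t x y)) - (\<Sum>k. (1 - t) * residual_term x k + t * residual_term y k))"
    unfolding T_eq[of "mix t x y"] by simp
  also have "\<dots> = (\<Sum>j. spend_term (mix t x y) j - ((1 - t) * spend_term x j + t * spend_term y j))
      + (\<Sum>k. residual_term (mix t x y) k - ((1 - t) * residual_term x k + t * residual_term y k))"
    using x y z
    by (simp add: suminf_diff summable_add summable_mult summable_spend_term summable_residual_term)
  finally show ?thesis .
qed

lemma T_concave:
  assumes x: "admissible B x" and y: "admissible B y" and t: "0 \<le> t" "t \<le> 1"
  shows "(1 - t) * T x + t * T y \<le> T (mix t x y)"
proof -
  have z: "admissible B (mix t x y)" by (rule admissible_mix[OF x y t])
  have "0 \<le> (\<Sum>j. spend_term (mix t x y) j - ((1 - t) * spend_term x j + t * spend_term y j))"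
    using spend_term_mix[OF x y t] x y z
    by (intro suminf_nonneg summable_diff summable_add summable_mult summable_spend_term) auto
  moreover have "0 \<le> (\<Sum>k. residual_term (mix t x y) k - ((1 - t) * residual_term x k + t * residual_term y k))"
    using residual_term_mix[OF x y t] x y z
    by (intro suminf_nonneg summable_diff summable_add summable_mult summable_residual_term) auto
  ultimately show ?thesis using T_mix_excess[OF x y t] by linarith
qed

lemma T_strictly_concave:
  assumes x: "admissible B x" and y: "admissible B y" and "x \<noteq> y"
  shows "(T x + T y) / 2 < T (mix (1/2) x y)"
proof -
  let ?z = "mix (1/2) x y"
  have z: "admissible B ?z" by (rule admissible_mix[OF x y]) auto
  obtain j where j: "x j \<noteq> y j" using \<open>x \<noteq> y\<close> by auto
  have "(log 2 (1 + \<gamma> * x j) + log 2 (1 + \<gamma> * y j)) / 2 < log 2 (1 + \<gamma> * ?z j)"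
  proof -
    have "1 + \<gamma> * x j \<noteq> 1 + \<gamma> * y j" using j \<gamma>_pos by simp
    moreover have "1 + \<gamma> * ?z j = ((1 + \<gamma> * x j) + (1 + \<gamma> * y j)) / 2"
      by (simp add: mix_def algebra_simps)
    ultimately show ?thesis
      using log2_midpoint_strict[OF one_plus_pos(1)[OF x] one_plus_pos(1)[OF y]] by presburger
  qed
  then have "p * (1 - p) ^ (j + w) / 2 * ((log 2 (1 + \<gamma> * x j) + log 2 (1 + \<gamma> * y j)) / 2)
      < p * (1 - p) ^ (j + w) / 2 * log 2 (1 + \<gamma> * ?z j)"
    using p_pos p_lt_1 by (intro mult_strict_left_mono) auto
  then have strict: "0 < spend_term ?z j - ((1 - 1/2) * spend_term x j + 1/2 * spend_term y j)"
    by (simp add: spend_term_def algebra_simps)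
  have "0 < (\<Sum>j. spend_term ?z j - ((1 - 1/2) * spend_term x j + 1/2 * spend_term y j))"
    using spend_term_mix[OF x y, of "1/2"] x y z strict
    by (intro suminf_pos2 summable_diff summable_add summable_mult summable_spend_term) auto
  moreover have "0 \<le> (\<Sum>k. residual_term ?z k - ((1 - 1/2) * residual_term x k + 1/2 * residual_term y k))"
    using residual_term_mix[OF x y, of "1/2"] x y z
    by (intro suminf_nonneg summable_diff summable_add summable_mult summable_residual_term) auto
  ultimately show ?thesis using T_mix_excess[OF x y, of "1/2"] by simp
qed

definition slope_spend :: "(nat \<Rightarrow> real) \<Rightarrow> nat \<Rightarrow> real" where
  "slope_spend x j = 1 / (1 + \<gamma> * x j)"

definition slope_residual :: "(nat \<Rightarrow> real) \<Rightarrow> nat \<Rightarrow> real" where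
  "slope_residual x k = 1 / (1 + \<gamma> * residual x k / real w)"

definition residual_weight :: "(nat \<Rightarrow> real) \<Rightarrow> nat \<Rightarrow> real" where
  "residual_weight x k = (1 - p) ^ k * slope_residual x k"

definition residual_tail :: "(nat \<Rightarrow> real) \<Rightarrow> nat \<Rightarrow> real" where
  "residual_tail x m = (\<Sum>k. residual_weight x (k + m))"

definition recursion :: "(nat \<Rightarrow> real) \<Rightarrow> bool" where
  "recursion x \<longleftrightarrow> (\<forall>j. (1 - p) / (1 + \<gamma> * x (Suc j))
      = 1 / (1 + \<gamma> * x j) - p / (1 + (\<gamma> / real w) * (B - (\<Sum>i\<le>j. x i))))"

lemma recursion_iff:
  "recursion x \<longleftrightarrow> (\<forall>j. (1 - p) * slope_spend x (Suc j) = slope_spend x j - p * slope_residual x j)"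
  by (simp add: recursion_def slope_spend_def slope_residual_def residual_def)

lemma slope_spend_bounds:
  assumes "admissible B x"
  shows "0 < slope_spend x j \<and> slope_spend x j \<le> 1"
proof -
  have "0 \<le> \<gamma> * x j" using admissible_bounds(1)[OF assms] \<gamma>_pos by simp
  then show ?thesis by (simp add: slope_spend_def)
qed

lemma slope_residual_bounds:
  assumes "admissible B x"
  shows "0 < slope_residual x k \<and> slope_residual x k \<le> 1"
proof -
  have "0 \<le> \<gamma> * residual x k / real w" using admissible_bounds(3)[OF assms] \<gamma>_pos by simp
  then show ?thesis by (simp add: slope_residual_def)
qed

lemma residual_weight_bounds: "admissible B x \<Longrightarrow> 0 < residual_weight x k \<and> residual_weight x k \<le> (1 - p) ^ k"
  using slope_residual_bounds[of x k] p_lt_1 by (simp add: residual_weight_def mult_le_cancel_left1)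

lemma geometric_tail_sum: "(\<Sum>k. (1 - p) ^ (k + m)) = (1 - p) ^ m / p"
  using p_pos p_lt_1 suminf_mult2[OF summable_geometric[of "1 - p"], of "(1 - p) ^ m"]
  by (simp add: power_add suminf_geometric)

lemma summable_geometric_tail: "summable (\<lambda>k. (1 - p) ^ (k + m))"
  using p_pos p_lt_1 by (simp add: power_add summable_geometric summable_mult2)

lemma summable_residual_weight:
  assumes "admissible B x"
  shows "summable (\<lambda>k. residual_weight x (k + m))"
  using residual_weight_bounds[OF assms]
  by (intro summable_comparison_test'[OF summable_geometric_tail[of m], where N = 0]) (simp add: abs_of_pos)

lemma residual_tail_Suc: "admissible B x \<Longrightarrow> residual_tail x m = residual_weight x m + residual_tail x (Suc m)"
  using suminf_split_head[OF summable_residual_weight[of x m]] by (simp add: residual_tail_def)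

lemma residual_tail_bounds:
  assumes "admissible B x"
  shows "0 \<le> residual_tail x m \<and> residual_tail x m \<le> (1 - p) ^ m / p"
proof
  show "0 \<le> residual_tail x m"
    unfolding residual_tail_def using residual_weight_bounds[OF assms] summable_residual_weight[OF assms]
    by (intro suminf_nonneg) (auto intro: less_imp_le)
  have "residual_tail x m \<le> (\<Sum>k. (1 - p) ^ (k + m))"
    unfolding residual_tail_def
    using residual_weight_bounds[OF assms] summable_residual_weight[OF assms] summable_geometric_tail
    by (intro suminf_le) auto
  then show "residual_tail x m \<le> (1 - p) ^ m / p" by (simp add: geometric_tail_sum)
qed

lemma residual_tail_tendsto_0:
  assumes "admissible B x"
  shows "residual_tail x \<longlonglongrightarrow> 0"
proof (rule Lim_null_comparison)
  show "\<forall>\<^sub>F m in sequentially. norm (residual_tail x m) \<le> (1 - p) ^ m / p"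
    using residual_tail_bounds[OF assms] by simp
  show "(\<lambda>m. (1 - p) ^ m / p) \<longlonglongrightarrow> 0"
    using p_pos p_lt_1 by (intro tendsto_divide_zero LIMSEQ_power_zero) auto
qed

text \<open>Under the recursion, \<open>(1 - p)^m / (1 + \<gamma> x_m) - p \<Sum>k\<ge>m. (1 - p)^k / (1 + \<gamma> R_k / w)\<close>
  does not depend on \<open>m\<close>; it tends to \<open>0\<close>, so it vanishes.\<close>

lemma recursion_balance:
  assumes x: "admissible B x" and "recursion x"
  shows "(1 - p) ^ m * slope_spend x m = p * residual_tail x m"
proof -
  define gap where "gap m = (1 - p) ^ m * slope_spend x m - p * residual_tail x m" for m
  have "gap (Suc m) = gap m" for m
  proof -
    have step: "(1 - p) * slope_spend x (Suc m) = slope_spend x m - p * slope_residual x m"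
      using \<open>recursion x\<close> by (simp add: recursion_iff)
    have "(1 - p) ^ Suc m * slope_spend x (Suc m) = (1 - p) ^ m * ((1 - p) * slope_spend x (Suc m))"
      by simp
    also have "\<dots> = (1 - p) ^ m * slope_spend x m - p * residual_weight x m"
      unfolding step by (simp add: residual_weight_def algebra_simps)
    finally show ?thesis using residual_tail_Suc[OF x, of m] by (simp add: gap_def algebra_simps)
  qed
  then have const: "gap m = gap 0" for m by (induction m) simp_all
  have "(\<lambda>m. (1 - p) ^ m * slope_spend x m) \<longlonglongrightarrow> 0"
  proof (rule Lim_null_comparison)
    show "\<forall>\<^sub>F m in sequentially. norm ((1 - p) ^ m * slope_spend x m) \<le> (1 - p) ^ m"
      using slope_spend_bounds[OF x] p_lt_1 by (simp add: abs_mult abs_of_pos mult_left_le)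
    show "(\<lambda>m. (1 - p) ^ m) \<longlonglongrightarrow> 0"
      using p_pos p_lt_1 by (intro LIMSEQ_power_zero) auto
  qed
  then have "gap \<longlonglongrightarrow> 0 - p * 0"
    unfolding gap_def[abs_def] using residual_tail_tendsto_0[OF x] by (intro tendsto_intros)
  then have "gap \<longlonglongrightarrow> 0" by simp
  then have "(\<lambda>_. gap 0) \<longlonglongrightarrow> 0"
    by (rule Lim_transform_eventually) (intro always_eventually allI const)
  then have "gap 0 = 0" by (simp add: LIMSEQ_const_iff)
  then show ?thesis using const[of m] by (simp add: gap_def)
qed

lemma partial_sum_diff_bounded:
  assumes x: "admissible B x" and y: "admissible B y"
  shows "\<bar>\<Sum>i<n. y i - x i\<bar> \<le> B"
  using admissible_bounds(6,7)[OF x, of n] admissible_bounds(6,7)[OF y, of n] by (simp add: sum_subtractf)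

lemma summable_residual_weight_partial_sums:
  assumes x: "admissible B x" and y: "admissible B y"
  shows "summable (\<lambda>k. residual_weight x k * (\<Sum>i\<le>k. y i - x i))"
proof (rule summable_geometric_bound[of "1 - p" _ B])
  fix k
  have "\<bar>\<Sum>i\<le>k. y i - x i\<bar> \<le> B"
    using partial_sum_diff_bounded[OF x y, of "Suc k"] by (simp add: lessThan_Suc_atMost)
  then have "residual_weight x k * \<bar>\<Sum>i\<le>k. y i - x i\<bar> \<le> (1 - p) ^ k * B"
    using residual_weight_bounds[OF x, of k] by (intro mult_mono) auto
  then show "\<bar>residual_weight x k * (\<Sum>i\<le>k. y i - x i)\<bar> \<le> B * (1 - p) ^ k"
    using residual_weight_bounds[OF x, of k] by (simp add: abs_mult mult.commute)
qed (use p_pos p_lt_1 in auto)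

lemma summable_residual_tail_diff:
  assumes x: "admissible B x" and y: "admissible B y"
  shows "summable (\<lambda>j. (y j - x j) * residual_tail x j)"
proof (rule summable_geometric_bound[of "1 - p" _ "B / p"])
  fix j
  have "\<bar>y j - x j\<bar> \<le> B"
    using admissible_bounds(1,2)[OF x, of j] admissible_bounds(1,2)[OF y, of j] by linarith
  then have "\<bar>y j - x j\<bar> * residual_tail x j \<le> B * ((1 - p) ^ j / p)"
    using residual_tail_bounds[OF x, of j] by (intro mult_mono) auto
  then show "\<bar>(y j - x j) * residual_tail x j\<bar> \<le> B / p * (1 - p) ^ j"
    using residual_tail_bounds[OF x, of j] by (simp add: abs_mult)
qed (use p_pos p_lt_1 in auto)

lemma residual_tail_by_parts:
  assumes x: "admissible B x" and y: "admissible B y"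
  shows "(\<Sum>j. (y j - x j) * residual_tail x j) = (\<Sum>k. residual_weight x k * (\<Sum>i\<le>k. y i - x i))"
  using residual_tail_Suc[OF x] residual_tail_tendsto_0[OF x] partial_sum_diff_bounded[OF x y]
    summable_residual_weight_partial_sums[OF x y] summable_residual_tail_diff[OF x y]
  by (rule suminf_by_parts)

definition slope_const :: real where
  "slope_const = p * (1 - p) ^ w * \<gamma> / (2 * ln 2)"

lemma slope_const_pos: "0 < slope_const"
  using p_pos p_lt_1 \<gamma>_pos by (simp add: slope_const_def)

lemma spend_term_tangent:
  assumes x: "admissible B x" and y: "admissible B y"
  shows "spend_term y j - spend_term x j \<le> slope_const * ((1 - p) ^ j * (y j - x j) * slope_spend x j)"
proof -
  have diff: "1 + \<gamma> * y j - (1 + \<gamma> * x j) = \<gamma> * (y j - x j)"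
    by (simp add: algebra_simps)
  have slope: "\<gamma> * (y j - x j) / (1 + \<gamma> * x j) = \<gamma> * (y j - x j) * slope_spend x j"
    by (simp add: slope_spend_def)
  have "log 2 (1 + \<gamma> * y j) - log 2 (1 + \<gamma> * x j) \<le> \<gamma> * (y j - x j) * slope_spend x j / ln 2"
    using log2_tangent[OF one_plus_pos(1)[OF x, of j] one_plus_pos(1)[OF y, of j]]
    unfolding diff slope .
  then have "p * (1 - p) ^ (j + w) / 2 * (log 2 (1 + \<gamma> * y j) - log 2 (1 + \<gamma> * x j))
      \<le> p * (1 - p) ^ (j + w) / 2 * (\<gamma> * (y j - x j) * slope_spend x j / ln 2)"
    using p_pos p_lt_1 by (intro mult_left_mono) auto
  then show ?thesis
    by (simp add: spend_term_def slope_const_def power_add field_simps)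
qed

lemma residual_term_tangent:
  assumes x: "admissible B x" and y: "admissible B y"
  shows "residual_term y k - residual_term x k
    \<le> slope_const * (p * (1 - p) ^ k * (residual y k - residual x k) * slope_residual x k)"
proof -
  have diff: "1 + \<gamma> * residual y k / real w - (1 + \<gamma> * residual x k / real w)
      = \<gamma> * (residual y k - residual x k) / real w"
    by (simp add: algebra_simps diff_divide_distrib)
  have slope: "\<gamma> * (residual y k - residual x k) / real w / (1 + \<gamma> * residual x k / real w)
      = \<gamma> * (residual y k - residual x k) / real w * slope_residual x k"
    by (simp add: slope_residual_def)
  have "log 2 (1 + \<gamma> * residual y k / real w) - log 2 (1 + \<gamma> * residual x k / real w)
      \<le> \<gamma> * (residual y k - residual x k) / real w * slope_residual x k / ln 2"
    using log2_tangent[OF one_plus_pos(2)[OF x, of k] one_plus_pos(2)[OF y, of k]]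
    unfolding diff slope .
  then have "p\<^sup>2 * (1 - p) ^ (k + w) * (real w / 2) *
        (log 2 (1 + \<gamma> * residual y k / real w) - log 2 (1 + \<gamma> * residual x k / real w))
      \<le> p\<^sup>2 * (1 - p) ^ (k + w) * (real w / 2) *
        (\<gamma> * (residual y k - residual x k) / real w * slope_residual x k / ln 2)"
    using p_pos p_lt_1 by (intro mult_left_mono) auto
  moreover have "residual_term y k - residual_term x k = p\<^sup>2 * (1 - p) ^ (k + w) * (real w / 2) *
      (log 2 (1 + \<gamma> * residual y k / real w) - log 2 (1 + \<gamma> * residual x k / real w))"
    by (simp add: residual_term_def algebra_simps)
  moreover have "p\<^sup>2 * (1 - p) ^ (k + w) * (real w / 2) *
        (\<gamma> * (residual y k - residual x k) / real w * slope_residual x k / ln 2)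
      = slope_const * (p * (1 - p) ^ k * (residual y k - residual x k) * slope_residual x k)"
    using w_real_pos by (simp add: slope_const_def power_add power2_eq_square field_simps)
  ultimately show ?thesis by simp
qed

definition is_maximizer :: "(nat \<Rightarrow> real) \<Rightarrow> bool" where
  "is_maximizer x \<longleftrightarrow> admissible B x \<and> (\<forall>y. admissible B y \<longrightarrow> T y \<le> T x)"

text \<open>Sufficiency of the first-order condition: by concavity, \<open>T y - T x\<close> is bounded by the
  derivative of \<open>T\<close> at \<open>x\<close> in direction \<open>y - x\<close>, which summation by parts and
  \<open>recursion_balance\<close> turn into zero.\<close>

lemma is_maximizer_of_recursion:
  assumes x: "admissible B x" and "recursion x"
  shows "is_maximizer x"
proof -
  have "T y \<le> T x" if y: "admissible B y" for y
  proof -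
    define u where "u j = (1 - p) ^ j * (y j - x j) * slope_spend x j" for j
    define v where "v k = p * (1 - p) ^ k * (residual y k - residual x k) * slope_residual x k" for k
    have u_eq: "u = (\<lambda>j. p * ((y j - x j) * residual_tail x j))"
      using recursion_balance[OF x \<open>recursion x\<close>] by (simp add: u_def fun_eq_iff mult_ac)
    have v_eq: "v = (\<lambda>k. - p * (residual_weight x k * (\<Sum>i\<le>k. y i - x i)))"
      by (simp add: v_def fun_eq_iff residual_weight_def residual_def sum_subtractf algebra_simps)
    have su: "summable u"
      unfolding u_eq by (intro summable_mult summable_residual_tail_diff x y)
    have sv: "summable v"
      unfolding v_eq by (intro summable_mult summable_residual_weight_partial_sums x y)
    have "T y - T x = (\<Sum>j. spend_term y j - spend_term x j) + (\<Sum>k. residual_term y k - residual_term x k)"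
      by (rule T_diff[OF x y])
    also have "\<dots> \<le> (\<Sum>j. slope_const * u j) + (\<Sum>k. slope_const * v k)"
    proof (rule add_mono)
      show "(\<Sum>j. spend_term y j - spend_term x j) \<le> (\<Sum>j. slope_const * u j)"
        using spend_term_tangent[OF x y]
        by (intro suminf_le summable_diff summable_spend_term summable_mult x y su) (simp add: u_def)
      show "(\<Sum>k. residual_term y k - residual_term x k) \<le> (\<Sum>k. slope_const * v k)"
        using residual_term_tangent[OF x y]
        by (intro suminf_le summable_diff summable_residual_term summable_mult x y sv) (simp add: v_def)
    qed
    also have "\<dots> = slope_const * (suminf u + suminf v)"
      using su sv by (simp add: suminf_mult distrib_left)
    also have "suminf u + suminf v = 0"
    proof -
      have "suminf u = p * (\<Sum>j. (y j - x j) * residual_tail x j)"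
        unfolding u_eq by (rule suminf_mult[OF summable_residual_tail_diff[OF x y]])
      moreover have "suminf v = - p * (\<Sum>k. residual_weight x k * (\<Sum>i\<le>k. y i - x i))"
        unfolding v_eq by (rule suminf_mult[OF summable_residual_weight_partial_sums[OF x y]])
      ultimately show ?thesis by (simp add: residual_tail_by_parts[OF x y])
    qed
    finally show ?thesis by simp
  qed
  then show ?thesis using x by (simp add: is_maximizer_def)
qed

lemma maximizer_unique:
  assumes "is_maximizer x" "admissible B y" "T y = T x"
  shows "y = x"
proof (rule ccontr)
  assume "y \<noteq> x"
  have x: "admissible B x" using assms(1) by (simp add: is_maximizer_def)
  have "(T x + T y) / 2 < T (mix (1/2) x y)"
    using T_strictly_concave[OF x assms(2)] \<open>y \<noteq> x\<close> by auto
  moreover have "T (mix (1/2) x y) \<le> T x"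
    using assms(1) admissible_mix[OF x assms(2)] by (simp add: is_maximizer_def)
  ultimately show False using assms(3) by simp
qed

text \<open>Moving mass \<open>e\<close> from slot \<open>j + 1\<close> to slot \<open>j\<close> changes only three terms of \<open>T\<close>;
  \<open>shift_gain\<close> is their change, each logarithm written as \<open>log 2 (a + b * e)\<close> to fit
  \<open>DERIV_log2_affine\<close>.\<close>

definition shift_mass :: "nat \<Rightarrow> real \<Rightarrow> (nat \<Rightarrow> real) \<Rightarrow> nat \<Rightarrow> real" where
  "shift_mass j e x i = x i + (if i = j then e else if i = Suc j then - e else 0)"

definition shift_gain :: "(nat \<Rightarrow> real) \<Rightarrow> nat \<Rightarrow> real \<Rightarrow> real" where
  "shift_gain x j e =
      p * (1 - p) ^ (j + w) / 2 * (log 2 ((1 + \<gamma> * x j) + \<gamma> * e) - log 2 (1 + \<gamma> * x j))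
    + p * (1 - p) ^ (Suc j + w) / 2 *
        (log 2 ((1 + \<gamma> * x (Suc j)) + (- \<gamma>) * e) - log 2 (1 + \<gamma> * x (Suc j)))
    + p\<^sup>2 * (1 - p) ^ (j + w) * (real w / 2) *
        (log 2 ((1 + \<gamma> * residual x j / real w) + (- \<gamma> / real w) * e) - log 2 (1 + \<gamma> * residual x j / real w))"

definition shift_gain_deriv :: "(nat \<Rightarrow> real) \<Rightarrow> nat \<Rightarrow> real" where
  "shift_gain_deriv x j =
     slope_const * (1 - p) ^ j * (slope_spend x j - (1 - p) * slope_spend x (Suc j) - p * slope_residual x j)"

lemma residual_shift_mass: "residual (shift_mass j e x) k = residual x k - (if k = j then e else 0)"
proof -
  have "(\<Sum>i\<le>k. if i = j then e else if i = Suc j then - e else 0) = (if k = j then e else 0)"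
    by (induction k) auto
  then show ?thesis by (simp add: residual_def shift_mass_def sum.distrib)
qed

lemma admissible_shift_mass:
  assumes x: "admissible B x" and "0 \<le> x j + e" "0 \<le> x (Suc j) - e"
  shows "admissible B (shift_mass j e x)"
proof -
  have "(\<lambda>i. if i = j then e else if i = Suc j then - e else 0)
      sums (\<Sum>i\<in>{j, Suc j}. if i = j then e else if i = Suc j then - e else 0)"
    by (rule sums_finite) auto
  then have "shift_mass j e x sums (suminf x + 0)"
    using x unfolding shift_mass_def[abs_def] admissible_def by (intro sums_add summable_sums) auto
  moreover have "0 \<le> shift_mass j e x i" for i
    using admissible_bounds(1)[OF x, of i] assms(2,3) by (simp add: shift_mass_def)
  ultimately show ?thesis using x by (simp add: admissible_def sums_iff)
qed

lemma T_shift_mass: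
  assumes x: "admissible B x" and "0 \<le> x j + e" "0 \<le> x (Suc j) - e"
  shows "T (shift_mass j e x) - T x = shift_gain x j e"
proof -
  have x': "admissible B (shift_mass j e x)" by (rule admissible_shift_mass[OF assms])
  have "(\<Sum>n. spend_term (shift_mass j e x) n - spend_term x n)
      = (\<Sum>n\<in>{j, Suc j}. spend_term (shift_mass j e x) n - spend_term x n)"
    by (rule suminf_finite) (auto simp: spend_term_def shift_mass_def)
  moreover have "(\<Sum>n. residual_term (shift_mass j e x) n - residual_term x n)
      = (\<Sum>n\<in>{j}. residual_term (shift_mass j e x) n - residual_term x n)"
    by (rule suminf_finite) (auto simp: residual_term_def residual_shift_mass)
  ultimately show ?thesis
    unfolding T_diff[OF x x']
    by (simp add: spend_term_def residual_term_def residual_shift_mass shift_gain_def shift_mass_def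
        algebra_simps diff_divide_distrib)
qed

lemma shift_gain_has_derivative:
  assumes x: "admissible B x"
  shows "(shift_gain x j has_real_derivative shift_gain_deriv x j) (at 0)"
proof -
  define D where "D =
      p * (1 - p) ^ (j + w) / 2 * (\<gamma> / (ln 2 * (1 + \<gamma> * x j)) - 0)
    + p * (1 - p) ^ (Suc j + w) / 2 * (- \<gamma> / (ln 2 * (1 + \<gamma> * x (Suc j))) - 0)
    + p\<^sup>2 * (1 - p) ^ (j + w) * (real w / 2) * (- \<gamma> / real w / (ln 2 * (1 + \<gamma> * residual x j / real w)) - 0)"
  have "(shift_gain x j has_real_derivative D) (at 0)"
    unfolding shift_gain_def[abs_def] D_def using one_plus_pos[OF x]
    by (intro DERIV_add DERIV_cmult DERIV_diff DERIV_const DERIV_log2_affine)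
  moreover have "D = shift_gain_deriv x j"
  proof -
    have "p * (1 - p) ^ (j + w) / 2 * (\<gamma> / (ln 2 * (1 + \<gamma> * x j)) - 0)
        = slope_const * (1 - p) ^ j * slope_spend x j"
      using one_plus_pos(1)[OF x, of j]
      by (simp add: slope_const_def slope_spend_def power_add field_simps)
    moreover have "p * (1 - p) ^ (Suc j + w) / 2 * (- \<gamma> / (ln 2 * (1 + \<gamma> * x (Suc j))) - 0)
        = - (slope_const * (1 - p) ^ j * ((1 - p) * slope_spend x (Suc j)))"
      using one_plus_pos(1)[OF x, of "Suc j"]
      by (simp add: slope_const_def slope_spend_def power_add field_simps)
    moreover have "p\<^sup>2 * (1 - p) ^ (j + w) * (real w / 2) * (- \<gamma> / real w / (ln 2 * (1 + \<gamma> * residual x j / real w)) - 0)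
        = - (slope_const * (1 - p) ^ j * (p * slope_residual x j))"
      using one_plus_pos(2)[OF x, of j] w_real_pos
      by (simp add: slope_const_def slope_residual_def power_add power2_eq_square field_simps)
    ultimately show ?thesis by (simp add: D_def shift_gain_deriv_def algebra_simps)
  qed
  ultimately show ?thesis by simp
qed

lemma maximizer_shift_gain_nonpos:
  assumes "is_maximizer x" "0 \<le> x j + e" "0 \<le> x (Suc j) - e"
  shows "shift_gain x j e \<le> 0"
proof -
  have x: "admissible B x" using assms(1) by (simp add: is_maximizer_def)
  then have "T (shift_mass j e x) \<le> T x"
    using assms(1) admissible_shift_mass[OF x assms(2,3)] by (simp add: is_maximizer_def)
  then show ?thesis using T_shift_mass[OF x assms(2,3)] by simp
qed

lemma maximizer_no_gap_before_mass:
  assumes m: "is_maximizer x" and "x j = 0"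
  shows "x (Suc j) = 0"
proof (rule ccontr)
  assume "x (Suc j) \<noteq> 0"
  have x: "admissible B x" using m by (simp add: is_maximizer_def)
  then have pos: "0 < x (Suc j)" using admissible_bounds(1)[OF x, of "Suc j"] \<open>x (Suc j) \<noteq> 0\<close> by simp
  then have "0 < \<gamma> * x (Suc j)" using \<gamma>_pos by simp
  then have "slope_spend x (Suc j) < 1" by (simp add: slope_spend_def divide_less_eq_1)
  then have "(1 - p) * slope_spend x (Suc j) < 1 - p" using p_lt_1 by simp
  moreover have "p * slope_residual x j \<le> p"
    using slope_residual_bounds[OF x, of j] p_pos by (simp add: mult_left_le)
  moreover have "slope_spend x j = 1" using \<open>x j = 0\<close> by (simp add: slope_spend_def)
  ultimately have "0 < slope_spend x j - (1 - p) * slope_spend x (Suc j) - p * slope_residual x j"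
    by linarith
  then have "0 < shift_gain_deriv x j"
    using slope_const_pos p_lt_1 by (simp add: shift_gain_deriv_def)
  then obtain h where "0 < h" "h \<le> x (Suc j)" "shift_gain x j 0 < shift_gain x j h"
    using DERIV_pos_right_increase[OF shift_gain_has_derivative[OF x] _ pos] by blast
  then show False
    using maximizer_shift_gain_nonpos[OF m, of j h] \<open>x j = 0\<close> by (simp add: shift_gain_def)
qed

lemma maximizer_residual_pos:
  assumes m: "is_maximizer x" and "0 < x j"
  shows "0 < residual x j"
proof (rule ccontr)
  assume "\<not> 0 < residual x j"
  have x: "admissible B x" using m by (simp add: is_maximizer_def)
  then have "residual x j = 0" using admissible_bounds(3)[OF x, of j] \<open>\<not> 0 < residual x j\<close> by simp
  moreover have "residual x (Suc j) = residual x j - x (Suc j)" by (simp add: residual_def)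
  ultimately have "x (Suc j) = 0"
    using admissible_bounds(1)[OF x, of "Suc j"] admissible_bounds(3)[OF x, of "Suc j"] by simp
  moreover have "0 < \<gamma> * x j" using \<open>0 < x j\<close> \<gamma>_pos by simp
  ultimately have "slope_spend x j - (1 - p) * slope_spend x (Suc j) - p * slope_residual x j < 0"
    using \<open>residual x j = 0\<close> by (simp add: slope_spend_def slope_residual_def divide_less_eq_1)
  then have "shift_gain_deriv x j < 0"
    using slope_const_pos p_lt_1 by (simp add: shift_gain_deriv_def mult_pos_neg)
  then obtain h where "0 < h" "h \<le> x j" "shift_gain x j 0 < shift_gain x j (- h)"
    using DERIV_neg_left_increase[OF shift_gain_has_derivative[OF x] _ \<open>0 < x j\<close>] by blast
  then show False
    using maximizer_shift_gain_nonpos[OF m, of j "- h"] \<open>x (Suc j) = 0\<close> by (simp add: shift_gain_def)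
qed

lemma suminf_geometric_from:
  "(\<Sum>k. if m \<le> k then K * (1 - p) ^ k else 0) = K * (1 - p) ^ m / p"
proof -
  let ?f = "\<lambda>k. if m \<le> k then K * (1 - p) ^ k else 0"
  have "summable ?f"
    using p_pos p_lt_1 by (intro summable_geometric_bound[of "1 - p" _ "\<bar>K\<bar>"]) (auto simp: abs_mult)
  then have "suminf ?f = (\<Sum>k. ?f (k + m)) + (\<Sum>k<m. ?f k)"
    by (rule suminf_split_initial_segment)
  also have "\<dots> = (\<Sum>k. K * (1 - p) ^ (k + m))" by simp
  also have "\<dots> = K * (1 - p) ^ m / p"
    using suminf_mult[OF summable_geometric_tail[of m], of K] by (simp add: geometric_tail_sum)
  finally show ?thesis .
qed

text \<open>A maximizer of finite support uses the whole budget: otherwise putting a little extra mass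
  right after its support increases \<open>T\<close>.\<close>

lemma maximizer_finite_support_sum:
  assumes m: "is_maximizer x" and zero: "\<And>k. n \<le> k \<Longrightarrow> x k = 0"
  shows "suminf x = B"
proof (rule ccontr)
  assume "suminf x \<noteq> B"
  have x: "admissible B x" using m by (simp add: is_maximizer_def)
  then have "suminf x < B" using \<open>suminf x \<noteq> B\<close> by (simp add: admissible_def)
  define S where "S = B - suminf x"
  have S: "0 < S" using \<open>suminf x < B\<close> by (simp add: S_def)
  define add_mass where "add_mass e i = x i + (if i = n then e else 0)" for e i
  have residual_S: "residual x k = S" if "n \<le> k" for k
  proof -
    have "(\<Sum>i\<le>k. x i) = suminf x" using that zero by (intro suminf_finite[symmetric]) auto
    then show ?thesis by (simp add: residual_def S_def)
  qed
  have residual_add: "residual (add_mass e) k = residual x k - (if n \<le> k then e else 0)" for e k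
    by (simp add: residual_def add_mass_def sum.distrib)
  have admissible_add: "admissible B (add_mass e)" if "0 \<le> e" "e \<le> S" for e
  proof -
    have "(\<lambda>i. if i = n then e else 0) sums (\<Sum>i\<in>{n}. if i = n then e else 0)"
      by (rule sums_finite) auto
    then have "add_mass e sums (suminf x + e)"
      using x unfolding add_mass_def[abs_def] admissible_def by (intro sums_add summable_sums) auto
    moreover have "0 \<le> add_mass e i" for i
      using admissible_bounds(1)[OF x, of i] that by (simp add: add_mass_def)
    ultimately show ?thesis using that by (auto simp: admissible_def sums_iff S_def)
  qed
  define c where "c = p * (1 - p) ^ (n + w) / 2"
  have c: "0 < c" using p_pos p_lt_1 by (simp add: c_def)
  define gain where "gain e = c * (log 2 (1 + \<gamma> * e) - log 2 1)
      + c * real w * (log 2 ((1 + \<gamma> * S / real w) + (- \<gamma> / real w) * e) - log 2 (1 + \<gamma> * S / real w))" for e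
  have T_add: "T (add_mass e) - T x = gain e" if e: "0 \<le> e" "e \<le> S" for e
  proof -
    have x': "admissible B (add_mass e)" by (rule admissible_add[OF e])
    have "(\<Sum>k. spend_term (add_mass e) k - spend_term x k) = (\<Sum>k\<in>{n}. spend_term (add_mass e) k - spend_term x k)"
      by (rule suminf_finite) (auto simp: spend_term_def add_mass_def)
    moreover have "(\<Sum>k. residual_term (add_mass e) k - residual_term x k)
        = (\<Sum>k. if n \<le> k then (p\<^sup>2 * (1 - p) ^ w * (real w / 2) *
            (log 2 (1 + \<gamma> * (S - e) / real w) - log 2 (1 + \<gamma> * S / real w))) * (1 - p) ^ k else 0)"
      by (intro suminf_cong) (simp add: residual_term_def residual_add residual_S power_add algebra_simps)
    ultimately have "T (add_mass e) - T x = (spend_term (add_mass e) n - spend_term x n)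
        + p\<^sup>2 * (1 - p) ^ w * (real w / 2) *
          (log 2 (1 + \<gamma> * (S - e) / real w) - log 2 (1 + \<gamma> * S / real w)) * (1 - p) ^ n / p"
      unfolding T_diff[OF x x'] suminf_geometric_from by simp
    then show ?thesis
      using zero[of n] p_pos
      by (simp add: gain_def c_def spend_term_def add_mass_def power_add power2_eq_square
          diff_divide_distrib algebra_simps)
  qed
  have pos: "0 < 1 + \<gamma> * S / real w" using S \<gamma>_pos w_real_pos by (simp add: add_pos_pos)
  define D where "D = c * (\<gamma> / (ln 2 * 1) - 0) + c * real w * (- \<gamma> / real w / (ln 2 * (1 + \<gamma> * S / real w)) - 0)"
  have "(gain has_real_derivative D) (at 0)"
    unfolding gain_def[abs_def] D_def using pos
    by (intro DERIV_add DERIV_cmult DERIV_diff DERIV_const DERIV_log2_affine) simp_all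
  moreover have "0 < D"
  proof -
    have "0 < \<gamma> * S / real w" using S \<gamma>_pos w_real_pos by simp
    then have "ln 2 < ln 2 * (1 + \<gamma> * S / real w)" by simp
    then have "\<gamma> / (ln 2 * (1 + \<gamma> * S / real w)) < \<gamma> / ln 2"
      using \<gamma>_pos by (intro divide_strict_left_mono) auto
    moreover have "D = c * (\<gamma> / ln 2 - \<gamma> / (ln 2 * (1 + \<gamma> * S / real w)))"
      using w_real_pos by (simp add: D_def right_diff_distrib)
    ultimately show ?thesis using c by simp
  qed
  ultimately obtain h where h: "0 < h" "h \<le> S" "gain 0 < gain h"
    using DERIV_pos_right_increase S by blast
  moreover have "T (add_mass h) \<le> T x"
    using m admissible_add[of h] h by (simp add: is_maximizer_def)
  ultimately show False using T_add[of h] by (simp add: gain_def)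
qed

lemma maximizer_pos:
  assumes m: "is_maximizer x"
  shows "0 < x j"
proof (rule ccontr)
  assume "\<not> 0 < x j"
  have x: "admissible B x" using m by (simp add: is_maximizer_def)
  then have "x j = 0" using admissible_bounds(1)[OF x, of j] \<open>\<not> 0 < x j\<close> by simp
  have zero: "x k = 0" if "j \<le> k" for k
    using that
  proof (induction k)
    case (Suc k)
    then show ?case
      using \<open>x j = 0\<close> maximizer_no_gap_before_mass[OF m] by (cases "j = Suc k") auto
  qed (use \<open>x j = 0\<close> in simp)
  then have sum_B: "suminf x = B" by (rule maximizer_finite_support_sum[OF m])
  define P where "P = {i. 0 < x i}"
  have "P \<subseteq> {..<j}"
  proof
    fix i assume "i \<in> P"
    then show "i \<in> {..<j}" using zero[of i] by (cases "j \<le> i") (auto simp: P_def)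
  qed
  then have "finite P" by (rule finite_subset) simp
  have "P \<noteq> {}"
  proof
    assume "P = {}"
    have "x i = 0" for i using \<open>P = {}\<close> admissible_bounds(1)[OF x, of i] by (simp add: P_def) (metis order_less_le)
    then have "x = (\<lambda>_. 0)" by auto
    then show False using sum_B B_pos by simp
  qed
  define i where "i = Max P"
  have "0 < x i" using Max_in[OF \<open>finite P\<close> \<open>P \<noteq> {}\<close>] by (simp add: i_def P_def)
  have "x k = 0" if "i < k" for k
    using Max_ge[OF \<open>finite P\<close>, of k] admissible_bounds(1)[OF x, of k] that
    by (force simp: i_def P_def)
  then have "(\<Sum>k\<le>i. x k) = suminf x" by (intro suminf_finite[symmetric]) auto
  then have "residual x i = 0" using sum_B by (simp add: residual_def)
  then show False using maximizer_residual_pos[OF m \<open>0 < x i\<close>] by simp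
qed

lemma maximizer_recursion:
  assumes m: "is_maximizer x"
  shows "recursion x"
proof -
  have x: "admissible B x" using m by (simp add: is_maximizer_def)
  have "shift_gain_deriv x j = 0" for j
  proof (rule DERIV_local_max[OF shift_gain_has_derivative[OF x]])
    show "0 < min (x j) (x (Suc j))" using maximizer_pos[OF m] by simp
    show "\<forall>h. \<bar>0 - h\<bar> < min (x j) (x (Suc j)) \<longrightarrow> shift_gain x j h \<le> shift_gain x j 0"
      using maximizer_shift_gain_nonpos[OF m] by (auto simp: shift_gain_def)
  qed
  then have "slope_spend x j - (1 - p) * slope_spend x (Suc j) - p * slope_residual x j = 0" for j
    using slope_const_pos p_lt_1 by (simp add: shift_gain_deriv_def)
  then show ?thesis unfolding recursion_iff by (simp add: algebra_simps)
qed

text \<open>A solution of the recursion that saves part of the budget forever would, by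
  \<open>recursion_balance\<close>, have \<open>x j \<ge> (B - suminf x) / w\<close> for all \<open>j\<close>, although \<open>x j\<close> tends
  to \<open>0\<close>.\<close>

lemma recursion_sum_eq_B:
  assumes x: "admissible B x" and "recursion x"
  shows "suminf x = B"
proof (rule ccontr)
  assume "suminf x \<noteq> B"
  then have "suminf x < B" using x by (simp add: admissible_def)
  define S where "S = B - suminf x"
  have S: "0 < S" using \<open>suminf x < B\<close> by (simp add: S_def)
  define G where "G = 1 / (1 + \<gamma> * S / real w)"
  have pos: "0 < 1 + \<gamma> * S / real w" using S \<gamma>_pos w_real_pos by (simp add: add_pos_pos)
  have slope_le: "slope_residual x k \<le> G" for k
  proof -
    have "S \<le> residual x k" using admissible_bounds(5)[OF x, of k] by (simp add: S_def residual_def)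
    then have "\<gamma> * S / real w \<le> \<gamma> * residual x k / real w"
      using \<gamma>_pos w_real_pos by (simp add: divide_right_mono)
    then show ?thesis unfolding slope_residual_def G_def using pos by (intro divide_left_mono) auto
  qed
  have lower: "S / real w \<le> x m" for m
  proof -
    have "residual_tail x m \<le> (\<Sum>k. G * (1 - p) ^ (k + m))"
      unfolding residual_tail_def residual_weight_def
      using slope_le p_lt_1 summable_residual_weight[OF x, of m] summable_geometric_tail[of m]
      by (intro suminf_le) (auto simp: residual_weight_def mult.commute mult_right_mono intro: summable_mult)
    also have "\<dots> = G * ((1 - p) ^ m / p)"
      by (subst suminf_mult[OF summable_geometric_tail]) (simp only: geometric_tail_sum)
    finally have "(1 - p) ^ m * slope_spend x m \<le> (1 - p) ^ m * G"
      using recursion_balance[OF x \<open>recursion x\<close>, of m] p_pos by (simp add: field_simps)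
    then have "slope_spend x m \<le> G" using p_pos p_lt_1 by simp
    then have "1 + \<gamma> * S / real w \<le> 1 + \<gamma> * x m"
      using pos one_plus_pos(1)[OF x, of m] by (simp add: slope_spend_def G_def divide_le_eq le_divide_eq)
    then have "\<gamma> * (S / real w) \<le> \<gamma> * x m" by simp
    then show ?thesis using \<gamma>_pos by (simp only: mult_le_cancel_left_pos)
  qed
  have "x \<longlonglongrightarrow> 0" using x by (intro summable_LIMSEQ_zero) (simp add: admissible_def)
  then obtain N where "\<forall>n\<ge>N. \<bar>x n\<bar> < S / real w"
    using S w_real_pos LIMSEQ_D[of x 0 "S / real w"] by auto
  then show False using lower[of N] by auto
qed

lemma slope_residual_lt_slope_spend:
  assumes m: "is_maximizer x"
  shows "slope_residual x j < slope_spend x j"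
proof -
  have x: "admissible B x" using m by (simp add: is_maximizer_def)
  have slope_mono: "slope_residual x k \<le> slope_residual x k'" if "k \<le> k'" for k k'
  proof -
    have "(\<Sum>i\<le>k. x i) \<le> (\<Sum>i\<le>k'. x i)" using that admissible_bounds(1)[OF x] by (intro sum_mono2) auto
    then have "\<gamma> * residual x k' / real w \<le> \<gamma> * residual x k / real w"
      using \<gamma>_pos w_real_pos by (simp add: residual_def divide_right_mono)
    then show ?thesis
      unfolding slope_residual_def using one_plus_pos(2)[OF x, of k'] by (intro divide_left_mono) auto
  qed
  have "slope_residual x j < slope_residual x (Suc j)"
  proof -
    have "\<gamma> * residual x (Suc j) / real w < \<gamma> * residual x j / real w"
      using maximizer_pos[OF m, of "Suc j"] \<gamma>_pos w_real_pos by (simp add: residual_def divide_strict_right_mono)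
    then show ?thesis
      unfolding slope_residual_def using one_plus_pos(2)[OF x, of "Suc j"] by (intro divide_strict_left_mono) auto
  qed
  have "slope_residual x (Suc j) * ((1 - p) ^ Suc j / p) \<le> residual_tail x (Suc j)"
  proof -
    have "(\<Sum>k. slope_residual x (Suc j) * (1 - p) ^ (k + Suc j)) \<le> residual_tail x (Suc j)"
      unfolding residual_tail_def residual_weight_def
      using slope_mono p_lt_1 summable_residual_weight[OF x, of "Suc j"] summable_geometric_tail[of "Suc j"]
      by (intro suminf_le) (auto simp: residual_weight_def mult.commute mult_left_mono intro: summable_mult)
    moreover have "(\<Sum>k. slope_residual x (Suc j) * (1 - p) ^ (k + Suc j))
        = slope_residual x (Suc j) * ((1 - p) ^ Suc j / p)"
      by (subst suminf_mult[OF summable_geometric_tail]) (simp only: geometric_tail_sum)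
    ultimately show ?thesis by simp
  qed
  then have "slope_residual x (Suc j) * (1 - p) ^ Suc j \<le> p * residual_tail x (Suc j)"
    using p_pos by (simp add: field_simps)
  moreover have "slope_residual x j * (1 - p) ^ Suc j < slope_residual x (Suc j) * (1 - p) ^ Suc j"
    using \<open>slope_residual x j < slope_residual x (Suc j)\<close> p_lt_1 by (intro mult_strict_right_mono) auto
  ultimately have "p * residual_weight x j + slope_residual x j * (1 - p) ^ Suc j < p * residual_tail x j"
    using residual_tail_Suc[OF x, of j] by (simp add: algebra_simps)
  then have "(1 - p) ^ j * slope_residual x j < (1 - p) ^ j * slope_spend x j"
    using recursion_balance[OF x maximizer_recursion[OF m], of j] by (simp add: residual_weight_def algebra_simps)
  then show ?thesis using p_lt_1 by simp
qed

lemma maximizer_lt_residual: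
  assumes m: "is_maximizer x"
  shows "x j < residual x j / real w"
proof -
  have x: "admissible B x" using m by (simp add: is_maximizer_def)
  have "1 + \<gamma> * x j < 1 + \<gamma> * residual x j / real w"
    using slope_residual_lt_slope_spend[OF m, of j] one_plus_pos[OF x]
    by (simp add: slope_spend_def slope_residual_def divide_less_eq less_divide_eq)
  then have "\<gamma> * x j < \<gamma> * (residual x j / real w)" by simp
  then show ?thesis using \<gamma>_pos by (simp only: mult_less_cancel_left_pos)
qed

lemma maximizer_strict_decreasing:
  assumes m: "is_maximizer x"
  shows "x (Suc j) < x j"
proof -
  have x: "admissible B x" using m by (simp add: is_maximizer_def)
  have "(1 - p) * slope_spend x (Suc j) = slope_spend x j - p * slope_residual x j"
    using maximizer_recursion[OF m] by (simp add: recursion_iff)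
  moreover have "p * slope_residual x j < p * slope_spend x j"
    using slope_residual_lt_slope_spend[OF m, of j] p_pos by simp
  ultimately have "(1 - p) * slope_spend x j < (1 - p) * slope_spend x (Suc j)"
    by (simp add: algebra_simps)
  then have "slope_spend x j < slope_spend x (Suc j)"
    using p_lt_1 by simp
  then have "1 + \<gamma> * x (Suc j) < 1 + \<gamma> * x j"
    using one_plus_pos(1)[OF x] by (simp add: slope_spend_def divide_less_eq less_divide_eq)
  then show ?thesis using \<gamma>_pos by simp
qed

lemma recursion_unique:
  assumes m: "is_maximizer x" and "\<And>j. 0 \<le> y j" "recursion y" "y sums B"
  shows "y = x"
proof -
  have y: "admissible B y" using assms(2,4) by (simp add: admissible_def sums_iff)
  have "T x \<le> T y"
    using is_maximizer_of_recursion[OF y \<open>recursion y\<close>] m by (simp add: is_maximizer_def)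
  moreover have "T y \<le> T x" using m y by (simp add: is_maximizer_def)
  ultimately show ?thesis using maximizer_unique[OF m y] by simp
qed

lemma SUP_T_eq_maximizer:
  assumes "is_maximizer x"
  shows "(SUP y\<in>{y. admissible B y}. ereal (T y)) = ereal (T x)"
proof (rule antisym)
  show "(SUP y\<in>{y. admissible B y}. ereal (T y)) \<le> ereal (T x)"
    using assms by (intro SUP_least) (simp add: is_maximizer_def)
  show "ereal (T x) \<le> (SUP y\<in>{y. admissible B y}. ereal (T y))"
    using assms by (intro SUP_upper) (simp add: is_maximizer_def)
qed

text \<open>Every admissible sequence is a limit of mixtures with a fixed positive one, along which \<open>T\<close>
  is bounded below by concavity; so bounds on positive sequences extend to all of them.\<close>

lemma T_le_of_positive_bound:
  assumes bound: "\<And>y. admissible B y \<Longrightarrow> (\<And>j. 0 < y j) \<Longrightarrow> T y \<le> c" and x: "admissible B x"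
  shows "T x \<le> c"
proof (rule field_le_epsilon)
  fix \<epsilon> :: real assume "0 < \<epsilon>"
  define y0 where "y0 j = B * (1 / 2) ^ Suc j" for j
  have y0_pos: "0 < y0 j" for j using B_pos by (simp add: y0_def)
  have "y0 sums (B * 1)" unfolding y0_def by (intro sums_mult power_half_series)
  then have y0: "admissible B y0" using y0_pos by (auto simp: admissible_def sums_iff less_imp_le)
  define M where "M = \<bar>T x - T y0\<bar> + 1"
  define t where "t = min 1 (\<epsilon> / M)"
  have M: "0 < M" by (simp add: M_def add_nonneg_pos)
  have t: "0 < t" "t \<le> 1" using \<open>0 < \<epsilon>\<close> M by (auto simp: t_def)
  have "t * M \<le> \<epsilon>" using M by (simp add: t_def min_mult_distrib_right pos_divide_le_eq)
  have "(1 - t) * T x + t * T y0 \<le> T (mix t x y0)" using t by (intro T_concave[OF x y0]) auto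
  also have "\<dots> \<le> c"
  proof (rule bound)
    show "admissible B (mix t x y0)" using t by (intro admissible_mix[OF x y0]) auto
    show "0 < mix t x y0 j" for j
      using t y0_pos[of j] admissible_bounds(1)[OF x, of j] by (simp add: mix_def add_nonneg_pos)
  qed
  finally have "T x \<le> c + t * (T x - T y0)" by (simp add: algebra_simps)
  also have "\<dots> \<le> c + t * M" using t by (simp add: M_def mult_left_mono)
  finally show "T x \<le> c + \<epsilon>" using \<open>t * M \<le> \<epsilon>\<close> by simp
qed

end

section \<open>Stationary rules realizing a given sequence\<close>

text \<open>A sequence with positive entries has strictly increasing partial sums, so the battery level
  \<open>B - (\<Sum>k<j. y k)\<close> determines \<open>j\<close>; spending \<open>y j\<close> at that level induces \<open>y\<close>.\<close>

definition rule_of_seq :: "real \<Rightarrow> (nat \<Rightarrow> real) \<Rightarrow> real \<Rightarrow> real" where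
  "rule_of_seq B y b = (if \<exists>j. b = B - (\<Sum>k<j. y k) then y (THE j. b = B - (\<Sum>k<j. y k)) else 0)"

lemma rule_of_seq_at:
  assumes pos: "\<And>j. 0 < y j"
  shows "rule_of_seq B y (B - (\<Sum>k<j. y k)) = y j"
proof -
  have mono: "strict_mono (\<lambda>n. \<Sum>k<n. y k)" using pos by (intro strict_monoI_Suc) simp
  have the: "(THE i. B - (\<Sum>k<j. y k) = B - (\<Sum>k<i. y k)) = j"
  proof (rule the_equality)
    fix i assume "B - (\<Sum>k<j. y k) = B - (\<Sum>k<i. y k)"
    then show "i = j" using strict_mono_eq[OF mono, of i j] by simp
  qed simp
  have "\<exists>i. B - (\<Sum>k<j. y k) = B - (\<Sum>k<i. y k)" by blast
  then show ?thesis unfolding rule_of_seq_def the by (simp only: if_True)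
qed

lemma ind_batt_rule_of_seq: "(\<And>j. 0 < y j) \<Longrightarrow> ind_batt B (rule_of_seq B y) j = B - (\<Sum>k<j. y k)"
  by (induction j) (simp_all add: rule_of_seq_at)

lemma induced_seq_rule_of_seq: "(\<And>j. 0 < y j) \<Longrightarrow> induced_seq B (rule_of_seq B y) = y"
  by (simp add: fun_eq_iff induced_seq_def ind_batt_rule_of_seq rule_of_seq_at)

lemma rule_of_seq_bounds:
  assumes y: "admissible B y" and pos: "\<And>j. 0 < y j" and "0 \<le> b"
  shows "0 \<le> rule_of_seq B y b \<and> rule_of_seq B y b \<le> b"
proof (cases "\<exists>j. b = B - (\<Sum>k<j. y k)")
  case True
  then obtain j where j: "b = B - (\<Sum>k<j. y k)" by blast
  have "(\<Sum>k<Suc j. y k) \<le> suminf y"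
    using y pos by (intro sum_le_suminf) (auto simp: admissible_def less_imp_le)
  then have "y j \<le> b" using y j by (simp add: admissible_def)
  then show ?thesis using j rule_of_seq_at[OF pos, where B = B and j = j] pos[of j] by simp
next
  case False
  then show ?thesis using \<open>0 \<le> b\<close> by (simp add: rule_of_seq_def)
qed

lemma T_inf_le_opt_value:
  assumes "0 < p" "p < 1" "0 < \<gamma>" "0 < B" "1 \<le> w"
    and y: "admissible B y" and pos: "\<And>j. 0 < y j"
  shows "ereal (T_inf p \<gamma> B w y) \<le> opt_value p \<gamma> B w"
proof -
  interpret stationary_throughput B w "rule_of_seq B y" p \<gamma>
    using assms rule_of_seq_bounds[OF y pos] by unfold_locales auto
  have "ereal (T_inf p \<gamma> B w y)
      = liminf (\<lambda>T. ereal (avg_throughput p \<gamma> w (stat_policy B w (rule_of_seq B y)) T))"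
    using liminf_avg_throughput induced_seq_rule_of_seq[OF pos] by simp
  also have "\<dots> \<le> opt_value p \<gamma> B w"
    unfolding opt_value_def using feasible_stat_policy by (intro SUP_upper) simp
  finally show ?thesis .
qed

theorem theorem1:
  fixes p \<gamma> B :: real and w :: nat and Afun :: "real \<Rightarrow> real"
  assumes "0 < p" and "p < 1" and "\<gamma> > 0" and "B > 0" and "w \<ge> 1"
    and "\<forall>b. 0 \<le> b \<and> b \<le> B \<longrightarrow> 0 \<le> Afun b \<and> Afun b \<le> b"
    and "feasible_policy B w (stat_policy B w Afun)"
    and "liminf (\<lambda>T. ereal (avg_throughput p \<gamma> w (stat_policy B w Afun) T)) = opt_value p \<gamma> B w"
  shows "(opt_value p \<gamma> B w = (SUP x\<in>{x. admissible B x}. ereal (T_inf p \<gamma> B w x)))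
    \<and> (admissible B (induced_seq B Afun)
         \<and> (\<forall>x. admissible B x \<longrightarrow> T_inf p \<gamma> B w x \<le> T_inf p \<gamma> B w (induced_seq B Afun))
         \<and> (\<forall>x. admissible B x \<and> T_inf p \<gamma> B w x = T_inf p \<gamma> B w (induced_seq B Afun)
               \<longrightarrow> x = induced_seq B Afun))
    \<and> ((\<forall>j. (1 - p) / (1 + \<gamma> * induced_seq B Afun (Suc j))
               = 1 / (1 + \<gamma> * induced_seq B Afun j)
                 - p / (1 + (\<gamma> / real w) * (B - (\<Sum>i\<le>j. induced_seq B Afun i))))
         \<and> induced_seq B Afun sums B
         \<and> (\<forall>x. (\<forall>j. 0 \<le> x j) \<and>
               (\<forall>j. (1 - p) / (1 + \<gamma> * x (Suc j))
                    = 1 / (1 + \<gamma> * x j) - p / (1 + (\<gamma> / real w) * (B - (\<Sum>i\<le>j. x i))))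
               \<and> x sums B \<longrightarrow> x = induced_seq B Afun))
    \<and> (\<forall>j. 0 < induced_seq B Afun j
           \<and> induced_seq B Afun (Suc j) < induced_seq B Afun j
           \<and> induced_seq B Afun j < (B - (\<Sum>i\<le>j. induced_seq B Afun i)) / real w)"
proof -
  interpret lookahead p \<gamma> B w using assms by unfold_locales
  interpret S: stationary_throughput B w Afun p \<gamma> using assms by unfold_locales auto
  let ?\<xi> = "induced_seq B Afun"
  have opt: "opt_value p \<gamma> B w = ereal (T ?\<xi>)" using assms(8) S.liminf_avg_throughput by simp
  have "T x \<le> T ?\<xi>" if "admissible B x" for x
    using T_le_of_positive_bound[OF _ that] T_inf_le_opt_value[OF assms(1-5)] opt by simp
  then have max: "is_maximizer ?\<xi>"
    using S.admissible_induced_seq by (simp add: is_maximizer_def)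
  have rec: "recursion ?\<xi>" by (rule maximizer_recursion[OF max])
  have "?\<xi> sums B"
    using recursion_sum_eq_B[OF S.admissible_induced_seq rec] S.admissible_induced_seq
    by (simp add: admissible_def sums_iff)
  then show ?thesis
    using opt SUP_T_eq_maximizer[OF max] max maximizer_unique[OF max] rec recursion_unique[OF max]
      maximizer_pos[OF max] maximizer_strict_decreasing[OF max] maximizer_lt_residual[OF max]
    unfolding is_maximizer_def recursion_def residual_def by auto
qed

end
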